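(* Let $\ell\ge 1$ and $n,m_1,\dots,m_\ell$ be positive integers, $m:=\sum_{i=1}^\ell m_i$. For $i=1,\dots,\ell$ let $C_i\subseteq\mathbb{R}^{m_i}$ be a nonempty closed convex set and $A_i\in\mathbb{R}^{m_i\times n}$ a nonzero matrix, and let $\bar v\in\mathbb{R}^n$; assume $\bigcap_{i=1}^\ell A_i^{-1}C_i\neq\emptyset$. Write $\mathbf y=(y_1,\dots,y_\ell)\in\mathbb{R}^m$ with $y_i\in\mathbb{R}^{m_i}$, $\mathbf A^T\mathbf y:=\sum_{i=1}^\ell A_i^Ty_i$, $D:=C_1\times\cdots\times C_\ell$, $g(\mathbf y):=\frac12\|\mathbf A^T\mathbf y-\bar v\|^2-\frac12\|\bar v\|^2$ and $d(\mathbf y):=g(\mathbf y)+\sigma_D(\mathbf y)$. Let $\{\mathbf y^t\}$ be generated by the following algorithm: set $\gamma_i:=\lambda_{\max}(A_i^TA_i)$, $y_i^0:=0\in\mathbb{R}^{m_i}$, $x^0_\ell:=\bar v$; for $t=0,1,2,\dots$ set $x^{t+1}_0:=x^t_\ell$ and for $i=1,\dots,\ell$ compute $$x^{t+1}_i=(I-\gamma_i^{-1}A_i^TA_i)x^{t+1}_{i-1}+\gamma_i^{-1}A_i^T\operatorname{Proj}_{C_i}(\gamma_iy_i^t+A_ix^{t+1}_{i-1}),$$ $$y^{t+1}_i=y_i^t+\gamma_i^{-1}A_ix^{t+1}_{i-1}-\gamma_i^{-1}\operatorname{Proj}_{C_i}(\gamma_iy^t_i+A_ix^{t+1}_{i-1}),$$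 then set $\mathbf y^{t+1}:=(y^{t+1}_1,\dots,y^{t+1}_\ell)$. For $i=1,\dots,\ell$ let $\tilde{\mathbf y}^{t+1}_{i-1}:=(y^{t+1}_1,\dots,y^{t+1}_{i-1},y^t_i,\dots,y^t_\ell)$ and $\tilde{\mathbf y}^{t+1}_\ell:=\mathbf y^{t+1}$. Then: (i) for each $i=1,\dots,\ell$ and $t\ge0$, $d(\tilde{\mathbf y}^{t+1}_i)-d(\tilde{\mathbf y}^{t+1}_{i-1})\le\frac12\Delta_i^t\le-\frac{\gamma_i}{2}\|y_i^{t+1}-y_i^t\|^2$, where $\Delta_i^t:=\langle\nabla_{y_i}g(\tilde{\mathbf y}^{t+1}_{i-1}),y_i^{t+1}-y_i^t\rangle+\sigma_D(\tilde{\mathbf y}^{t+1}_i)-\sigma_D(\tilde{\mathbf y}^{t+1}_{i-1})$; (ii) there exists $c>0$ such that $d(\mathbf y^{t+1})-d(\mathbf y^t)\le-c\|\mathbf y^{t+1}-\mathbf y^t\|^2$ for all $t$; (iii) $\lim_{t\to\infty}\|\mathbf y^{t+1}-\mathbf y^t\|=0$; (iv) $\lim_{t\to\infty}\operatorname{dist}(\mathbf 0,\partial d(\mathbf y^t))=0$; (v) every accumulation point of $\{\mathbf y^t\}$ is a minimizer of $d$.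
   Context: $\sigma_C(y):=\sup_{u\in C}\langle y,u\rangle$ is the support function of $C$, so $\sigma_D(\mathbf y)=\sum_i\sigma_{C_i}(y_i)$. $\operatorname{Proj}_C$ is the Euclidean projection onto $C$. $\partial d$ is the convex subdifferential of $d$, $\lambda_{\max}$ the largest eigenvalue, and $\operatorname{dist}(x,S):=\inf_{s\in S}\|x-s\|$. *)

theory Defs
  imports Complex_Main "HOL-Library.Extended_Real"
begin

text \<open>Vectors of R^k are represented as functions nat => real vanishing from index k on.
Matrices of size r x c are functions nat => nat => real (row, column), of which only
entries with row < r and column < c are used.\<close>

definition Rk :: "nat \<Rightarrow> (nat \<Rightarrow> real) set" where
  "Rk k = {v. \<forall>j\<ge>k. v j = 0}"

definition vinner :: "nat \<Rightarrow> (nat \<Rightarrow> real) \<Rightarrow> (nat \<Rightarrow> real) \<Rightarrow> real" where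
  "vinner k u v = (\<Sum>j<k. u j * v j)"

definition vnorm :: "nat \<Rightarrow> (nat \<Rightarrow> real) \<Rightarrow> real" where
  "vnorm k v = sqrt (vinner k v v)"

definition vsub :: "(nat \<Rightarrow> real) \<Rightarrow> (nat \<Rightarrow> real) \<Rightarrow> (nat \<Rightarrow> real)" where
  "vsub u v = (\<lambda>j. u j - v j)"

definition vconvex :: "(nat \<Rightarrow> real) set \<Rightarrow> bool" where
  "vconvex C \<longleftrightarrow> (\<forall>u\<in>C. \<forall>w\<in>C. \<forall>a::real. 0 \<le> a \<and> a \<le> 1 \<longrightarrow>
                      (\<lambda>j. (1 - a) * u j + a * w j) \<in> C)"

definition vclosed :: "nat \<Rightarrow> (nat \<Rightarrow> real) set \<Rightarrow> bool" where
  "vclosed k C \<longleftrightarrow> (\<forall>s u. (\<forall>t. s t \<in> C) \<longrightarrow> u \<in> Rk k \<longrightarrow>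
       (\<lambda>t. vnorm k (vsub (s t) u)) \<longlonglongrightarrow> 0 \<longrightarrow> u \<in> C)"

definition vproj :: "nat \<Rightarrow> (nat \<Rightarrow> real) set \<Rightarrow> (nat \<Rightarrow> real) \<Rightarrow> (nat \<Rightarrow> real)" where
  "vproj k C z = (THE p. p \<in> C \<and> (\<forall>q\<in>C. vnorm k (vsub z p) \<le> vnorm k (vsub z q)))"

definition supp :: "nat \<Rightarrow> (nat \<Rightarrow> real) set \<Rightarrow> (nat \<Rightarrow> real) \<Rightarrow> ereal" where
  "supp k C y = (SUP u\<in>C. ereal (vinner k y u))"

definition mv :: "nat \<Rightarrow> nat \<Rightarrow> (nat \<Rightarrow> nat \<Rightarrow> real) \<Rightarrow> (nat \<Rightarrow> real) \<Rightarrow> (nat \<Rightarrow> real)" where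
  "mv r c A x = (\<lambda>i. if i < r then (\<Sum>j<c. A i j * x j) else 0)"

definition mtv :: "nat \<Rightarrow> nat \<Rightarrow> (nat \<Rightarrow> nat \<Rightarrow> real) \<Rightarrow> (nat \<Rightarrow> real) \<Rightarrow> (nat \<Rightarrow> real)" where
  "mtv r c A y = (\<lambda>j. if j < c then (\<Sum>i<r. A i j * y i) else 0)"

definition mtm :: "nat \<Rightarrow> nat \<Rightarrow> (nat \<Rightarrow> nat \<Rightarrow> real) \<Rightarrow> (nat \<Rightarrow> nat \<Rightarrow> real)" where
  "mtm r c A = (\<lambda>j k. \<Sum>i<r. A i j * A i k)"

definition lam_max :: "nat \<Rightarrow> (nat \<Rightarrow> nat \<Rightarrow> real) \<Rightarrow> real" where
  "lam_max n M = Max {lam. \<exists>v\<in>Rk n. v \<noteq> (\<lambda>_. 0) \<and> mv n n M v = (\<lambda>j. lam * v j)}"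

text \<open>Block vectors y = (y_1,...,y_l): Y i is the i-th block (i = 1..l), in R^(ms i);
blocks with index outside {1..l} are zero (padding).\<close>
definition BS :: "nat \<Rightarrow> (nat \<Rightarrow> nat) \<Rightarrow> (nat \<Rightarrow> nat \<Rightarrow> real) set" where
  "BS l ms = {Y. (\<forall>i\<in>{1..l}. Y i \<in> Rk (ms i)) \<and> (\<forall>i. i \<notin> {1..l} \<longrightarrow> Y i = (\<lambda>_. 0))}"

definition bsub :: "(nat \<Rightarrow> nat \<Rightarrow> real) \<Rightarrow> (nat \<Rightarrow> nat \<Rightarrow> real) \<Rightarrow> (nat \<Rightarrow> nat \<Rightarrow> real)" where
  "bsub Y Z = (\<lambda>i. vsub (Y i) (Z i))"

definition binner :: "nat \<Rightarrow> (nat \<Rightarrow> nat) \<Rightarrow> (nat \<Rightarrow> nat \<Rightarrow> real) \<Rightarrow> (nat \<Rightarrow> nat \<Rightarrow> real) \<Rightarrow> real" where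
  "binner l ms Y Z = (\<Sum>i=1..l. vinner (ms i) (Y i) (Z i))"

definition bnorm :: "nat \<Rightarrow> (nat \<Rightarrow> nat) \<Rightarrow> (nat \<Rightarrow> nat \<Rightarrow> real) \<Rightarrow> real" where
  "bnorm l ms Y = sqrt (binner l ms Y Y)"

definition AtY :: "nat \<Rightarrow> (nat \<Rightarrow> nat) \<Rightarrow> nat \<Rightarrow> (nat \<Rightarrow> nat \<Rightarrow> nat \<Rightarrow> real)
                   \<Rightarrow> (nat \<Rightarrow> nat \<Rightarrow> real) \<Rightarrow> (nat \<Rightarrow> real)" where
  "AtY l ms n A Y = (\<lambda>c. \<Sum>i=1..l. mtv (ms i) n (A i) (Y i) c)"

definition sigD :: "nat \<Rightarrow> (nat \<Rightarrow> nat) \<Rightarrow> (nat \<Rightarrow> (nat \<Rightarrow> real) set) \<Rightarrow> (nat \<Rightarrow> nat \<Rightarrow> real) \<Rightarrow> ereal" where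
  "sigD l ms C Y = (\<Sum>i=1..l. supp (ms i) (C i) (Y i))"

definition gfun :: "nat \<Rightarrow> (nat \<Rightarrow> nat) \<Rightarrow> nat \<Rightarrow> (nat \<Rightarrow> nat \<Rightarrow> nat \<Rightarrow> real) \<Rightarrow> (nat \<Rightarrow> real)
                    \<Rightarrow> (nat \<Rightarrow> nat \<Rightarrow> real) \<Rightarrow> real" where
  "gfun l ms n A v Y = (1/2) * (vnorm n (vsub (AtY l ms n A Y) v))\<^sup>2 - (1/2) * (vnorm n v)\<^sup>2"

definition gradg :: "nat \<Rightarrow> (nat \<Rightarrow> nat) \<Rightarrow> nat \<Rightarrow> (nat \<Rightarrow> nat \<Rightarrow> nat \<Rightarrow> real) \<Rightarrow> (nat \<Rightarrow> real)
                    \<Rightarrow> nat \<Rightarrow> (nat \<Rightarrow> nat \<Rightarrow> real) \<Rightarrow> (nat \<Rightarrow> real)" where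
  "gradg l ms n A v i Y = mv (ms i) n (A i) (vsub (AtY l ms n A Y) v)"

definition dfun :: "nat \<Rightarrow> (nat \<Rightarrow> nat) \<Rightarrow> nat \<Rightarrow> (nat \<Rightarrow> nat \<Rightarrow> nat \<Rightarrow> real) \<Rightarrow> (nat \<Rightarrow> real)
                    \<Rightarrow> (nat \<Rightarrow> (nat \<Rightarrow> real) set) \<Rightarrow> (nat \<Rightarrow> nat \<Rightarrow> real) \<Rightarrow> ereal" where
  "dfun l ms n A v C Y = ereal (gfun l ms n A v Y) + sigD l ms C Y"

definition subdiff :: "nat \<Rightarrow> (nat \<Rightarrow> nat) \<Rightarrow> ((nat \<Rightarrow> nat \<Rightarrow> real) \<Rightarrow> ereal)
                      \<Rightarrow> (nat \<Rightarrow> nat \<Rightarrow> real) \<Rightarrow> (nat \<Rightarrow> nat \<Rightarrow> real) set" where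
  "subdiff l ms f Y = {S \<in> BS l ms. \<bar>f Y\<bar> \<noteq> \<infinity> \<and>
       (\<forall>Z\<in>BS l ms. f Y + ereal (binner l ms S (bsub Z Y)) \<le> f Z)}"

text \<open>dist(0, S) = inf over s in S of ||s|| (= +infinity for empty S).\<close>
definition dist0 :: "nat \<Rightarrow> (nat \<Rightarrow> nat) \<Rightarrow> (nat \<Rightarrow> nat \<Rightarrow> real) set \<Rightarrow> ereal" where
  "dist0 l ms S = (INF s\<in>S. ereal (bnorm l ms s))"

definition mixb :: "(nat \<Rightarrow> nat \<Rightarrow> real) \<Rightarrow> (nat \<Rightarrow> nat \<Rightarrow> real) \<Rightarrow> nat \<Rightarrow> (nat \<Rightarrow> nat \<Rightarrow> real)" where
  "mixb Y' Y i = (\<lambda>k. if k \<le> i then Y' k else Y k)"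

end

theory Submission
  imports Defs "Jordan_Normal_Form.Char_Poly"
begin

text \<open>The iteration is block-coordinate proximal-gradient descent on the dual function
  d = g + sigma_D. By induction, x^{t+1}_i = vbar - A^T y~^{t+1}_i, so the block gradient of g at
  y~^{t+1}_{i-1} is -A_i x^{t+1}_{i-1}, and the update of y_i says gam_i y^{t+1}_i = z - Proj_{C_i} z
  for z = gam_i y^t_i + A_i x^{t+1}_{i-1}. Hence the projection point P attains sigma_{C_i} at
  y^{t+1}_i, and block gradient plus P equals -gam_i (y^{t+1}_i - y^t_i). As g is quadratic with
  block curvature ||A_i||^2 <= gam_i = lambda_max(A_i^T A_i), this yields the block descent
  estimate (i), and summing over the blocks gives (ii). Any point of the intersection of the
  A_i^{-1} C_i bounds d from below (weak duality), which gives (iii). The block vector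
  (grad_i g(y^{t+1}) + P_i)_i is a subgradient of d at y^{t+1} that tends to 0, giving (iv); along
  a convergent subsequence the P_i converge to A_i (vbar - A^T y*), which lies in C_i by
  closedness, and the limiting subgradient is 0, giving (v).\<close>

section \<open>Vectors in R^k\<close>

lemma Rk_outside: "v \<in> Rk k \<Longrightarrow> k \<le> j \<Longrightarrow> v j = 0"
  unfolding Rk_def by simp

lemma vinner_commute: "vinner k u v = vinner k v u"
  unfolding vinner_def by (simp add: mult.commute)

lemma vinner_self_nonneg: "0 \<le> vinner k v v"
  unfolding vinner_def by (simp add: sum_nonneg)

lemma vnorm_nonneg: "0 \<le> vnorm k v"
  unfolding vnorm_def using vinner_self_nonneg by simp

lemma vnorm_power2: "(vnorm k v)\<^sup>2 = vinner k v v"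
  unfolding vnorm_def using vinner_self_nonneg by simp

lemma coord_square_le_vinner: "j < k \<Longrightarrow> v j * v j \<le> vinner k v v"
  unfolding vinner_def by (rule member_le_sum) auto

lemma abs_coord_le_vnorm: "j < k \<Longrightarrow> \<bar>v j\<bar> \<le> vnorm k v"
  unfolding vnorm_def using real_sqrt_le_mono[OF coord_square_le_vinner] by simp

lemma vinner_self_eq_0_coord: "vinner k v v = 0 \<Longrightarrow> j < k \<Longrightarrow> v j = 0"
  using coord_square_le_vinner[of j k v] by (auto simp: mult_le_0_iff)

lemma Rk_eqI:
  assumes "u \<in> Rk k" "v \<in> Rk k" "vinner k (vsub u v) (vsub u v) = 0"
  shows "u = v"
proof (rule ext)
  fix j
  show "u j = v j"
  proof (cases "j < k")
    case True
    then show ?thesis using vinner_self_eq_0_coord[OF assms(3)] by (simp add: vsub_def)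
  next
    case False
    then show ?thesis using Rk_outside[OF assms(1)] Rk_outside[OF assms(2)] by simp
  qed
qed

lemma vinner_unit_left:
  assumes "c < k"
  shows "vinner k (\<lambda>j. if j = c then 1 else 0) v = v c"
proof -
  have "(\<Sum>j<k. (if j = c then 1 else 0) * v j) = (\<Sum>j<k. if j = c then v j else 0)"
    by (rule sum.cong) auto
  then show ?thesis unfolding vinner_def using assms by simp
qed

lemma vinner_add_left: "vinner k (\<lambda>j. u j + w j) v = vinner k u v + vinner k w v"
  unfolding vinner_def by (simp add: distrib_right sum.distrib)
lemma vinner_diff_left: "vinner k (\<lambda>j. u j - w j) v = vinner k u v - vinner k w v"
  unfolding vinner_def by (simp add: left_diff_distrib sum_subtractf)
lemma vinner_scale_left: "vinner k (\<lambda>j. a * u j) v = a * vinner k u v"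
  unfolding vinner_def by (simp add: sum_distrib_left mult.assoc)
lemma vinner_add_right: "vinner k v (\<lambda>j. u j + w j) = vinner k v u + vinner k v w"
  unfolding vinner_def by (simp add: distrib_left sum.distrib)
lemma vinner_diff_right: "vinner k v (\<lambda>j. u j - w j) = vinner k v u - vinner k v w"
  unfolding vinner_def by (simp add: right_diff_distrib sum_subtractf)
lemma vinner_scale_right: "vinner k v (\<lambda>j. a * u j) = a * vinner k v u"
  unfolding vinner_def by (simp add: sum_distrib_left ac_simps)

lemmas vinner_linear = vinner_add_left vinner_diff_left vinner_scale_left
  vinner_add_right vinner_diff_right vinner_scale_right

lemma vinner_add_self:
  "vinner k (\<lambda>j. u j + w j) (\<lambda>j. u j + w j) = vinner k u u + 2 * vinner k u w + vinner k w w"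
  by (simp add: vinner_linear vinner_commute[of k w u])

lemma mv_Rk: "mv r c M x \<in> Rk r"
  unfolding Rk_def mv_def by simp
lemma mtv_Rk: "mtv r c M y \<in> Rk c"
  unfolding Rk_def mtv_def by simp

lemma mv_add: "mv r c M (\<lambda>j. u j + w j) = (\<lambda>i. mv r c M u i + mv r c M w i)"
  unfolding mv_def by (auto simp: distrib_left sum.distrib)
lemma mv_scale: "mv r c M (\<lambda>j. a * u j) = (\<lambda>i. a * mv r c M u i)"
  unfolding mv_def by (auto simp: sum_distrib_left ac_simps)
lemma mv_neg: "mv r c M (\<lambda>j. - u j) = (\<lambda>i. - mv r c M u i)"
  unfolding mv_def by (auto simp: sum_negf)
lemma mv_zero: "mv r c M (\<lambda>j. 0) = (\<lambda>i. 0)"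
  unfolding mv_def by auto
lemma mtv_diff: "mtv r c M (\<lambda>j. u j - w j) = (\<lambda>i. mtv r c M u i - mtv r c M w i)"
  unfolding mtv_def by (auto simp: right_diff_distrib sum_subtractf)
lemma mtv_scale: "mtv r c M (\<lambda>j. a * u j) = (\<lambda>i. a * mtv r c M u i)"
  unfolding mtv_def by (auto simp: sum_distrib_left ac_simps)
lemma mtv_zero: "mtv r c M (\<lambda>j. 0) = (\<lambda>i. 0)"
  unfolding mtv_def by auto

lemma vinner_mv_mtv: "vinner r (mv r c M x) y = vinner c x (mtv r c M y)"
proof -
  have "vinner r (mv r c M x) y = (\<Sum>i<r. \<Sum>j<c. M i j * x j * y i)"
    unfolding vinner_def mv_def by (simp add: sum_distrib_right)
  also have "\<dots> = (\<Sum>j<c. \<Sum>i<r. M i j * x j * y i)" by (rule sum.swap)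
  also have "\<dots> = vinner c x (mtv r c M y)"
    unfolding vinner_def mtv_def by (simp add: sum_distrib_left ac_simps)
  finally show ?thesis .
qed

lemma mv_mtm: "mv n n (mtm m n A) u = mtv m n A (mv m n A u)"
proof (rule ext)
  fix j
  show "mv n n (mtm m n A) u j = mtv m n A (mv m n A u) j"
  proof (cases "j < n")
    case True
    have "mv n n (mtm m n A) u j = (\<Sum>k<n. \<Sum>i<m. A i j * A i k * u k)"
      using True unfolding mv_def mtm_def by (simp add: sum_distrib_right)
    also have "\<dots> = (\<Sum>i<m. \<Sum>k<n. A i j * A i k * u k)" by (rule sum.swap)
    also have "\<dots> = mtv m n A (mv m n A u) j"
      using True unfolding mtv_def mv_def by (simp add: sum_distrib_left ac_simps)
    finally show ?thesis .
  qed (simp add: mv_def mtv_def)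
qed

lemma vinner_mv_mtm: "vinner n u (mv n n (mtm m n A) u) = vinner m (mv m n A u) (mv m n A u)"
  by (simp add: mv_mtm vinner_mv_mtv vinner_commute)

section \<open>Coordinatewise convergence and compactness\<close>

lemma tendsto_mv:
  "(\<And>j. (\<lambda>t. f t j) \<longlonglongrightarrow> g j) \<Longrightarrow> (\<lambda>t. mv r c M (f t) i) \<longlonglongrightarrow> mv r c M g i"
  unfolding mv_def by (cases "i < r") (simp_all add: tendsto_sum tendsto_mult_left)

lemma tendsto_mtv:
  "(\<And>j. (\<lambda>t. f t j) \<longlonglongrightarrow> g j) \<Longrightarrow> (\<lambda>t. mtv r c M (f t) i) \<longlonglongrightarrow> mtv r c M g i"
  unfolding mtv_def by (cases "i < c") (simp_all add: tendsto_sum tendsto_mult_left)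

lemma tendsto_vinner:
  "(\<And>j. (\<lambda>t. f t j) \<longlonglongrightarrow> g j) \<Longrightarrow> (\<And>j. (\<lambda>t. f' t j) \<longlonglongrightarrow> g' j)
   \<Longrightarrow> (\<lambda>t. vinner k (f t) (f' t)) \<longlonglongrightarrow> vinner k g g'"
  unfolding vinner_def by (intro tendsto_sum tendsto_mult)

lemma tendsto_vnorm: "(\<And>j. (\<lambda>t. f t j) \<longlonglongrightarrow> g j) \<Longrightarrow> (\<lambda>t. vnorm k (f t)) \<longlonglongrightarrow> vnorm k g"
  unfolding vnorm_def by (intro tendsto_real_sqrt tendsto_vinner)

lemma tendsto_vnorm_vsub_0:
  assumes "\<And>j. (\<lambda>t. f t j) \<longlonglongrightarrow> g j"
  shows "(\<lambda>t. vnorm k (vsub (f t) g)) \<longlonglongrightarrow> 0"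
proof -
  have "(\<lambda>t. vnorm k (vsub (f t) g)) \<longlonglongrightarrow> vnorm k (vsub g g)"
    unfolding vsub_def using assms by (intro tendsto_vnorm tendsto_diff tendsto_const)
  then show ?thesis by (simp add: vsub_def vnorm_def vinner_def)
qed

lemma bounded_real_seq_convergent_subseq:
  fixes s :: "nat \<Rightarrow> real"
  assumes "\<And>t. \<bar>s t\<bar> \<le> B"
  shows "\<exists>r a. strict_mono r \<and> (\<lambda>t. s (r t)) \<longlonglongrightarrow> a"
proof -
  obtain r where r: "strict_mono r" "monoseq (\<lambda>t. s (r t))" using seq_monosub by blast
  have "Bseq (\<lambda>t. s (r t))" using assms by (intro BseqI'[of _ B]) auto
  then have "convergent (\<lambda>t. s (r t))" using r(2) Bseq_monoseq_convergent by blast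
  then show ?thesis using r(1) unfolding convergent_def by blast
qed

lemma bounded_coords_convergent_subseq:
  fixes s :: "nat \<Rightarrow> nat \<Rightarrow> real"
  assumes "\<And>t j. \<bar>s t j\<bar> \<le> B"
  shows "\<exists>r u. strict_mono r \<and> (\<forall>j<p. (\<lambda>t. s (r t) j) \<longlonglongrightarrow> u j)"
proof (induction p)
  case 0
  show ?case by (intro exI[of _ id]) (simp add: strict_mono_def)
next
  case (Suc p)
  then obtain r u where r: "strict_mono r" and u: "\<forall>j<p. (\<lambda>t. s (r t) j) \<longlonglongrightarrow> u j" by blast
  obtain r' a where r': "strict_mono r'" and a: "(\<lambda>t. s (r (r' t)) p) \<longlonglongrightarrow> a"
    using bounded_real_seq_convergent_subseq[of "\<lambda>t. s (r t) p" B, OF assms] by blast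
  define r2 where "r2 = r \<circ> r'"
  have "(\<lambda>t. s (r2 t) j) \<longlonglongrightarrow> (u(p := a)) j" if j: "j < Suc p" for j
  proof (cases "j = p")
    case False
    then have "(\<lambda>t. s (r t) j) \<longlonglongrightarrow> u j" using u j by simp
    from LIMSEQ_subseq_LIMSEQ[OF this r'] show ?thesis using False by (simp add: r2_def o_def)
  qed (use a in \<open>simp add: r2_def\<close>)
  moreover have "strict_mono r2" unfolding r2_def using r r' by (rule strict_mono_o)
  ultimately show ?case by blast
qed

lemma bounded_Rk_convergent_subseq:
  fixes s :: "nat \<Rightarrow> nat \<Rightarrow> real"
  assumes "\<And>t. s t \<in> Rk k" "\<And>t j. \<bar>s t j\<bar> \<le> B"
  shows "\<exists>r u. strict_mono r \<and> u \<in> Rk k \<and> (\<forall>j. (\<lambda>t. s (r t) j) \<longlonglongrightarrow> u j)"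
proof -
  obtain r u where r: "strict_mono r" and u: "\<forall>j<k. (\<lambda>t. s (r t) j) \<longlonglongrightarrow> u j"
    using bounded_coords_convergent_subseq[of s B k, OF assms(2)] by blast
  define u' where "u' j = (if j < k then u j else 0)" for j
  have "(\<lambda>t. s (r t) j) \<longlonglongrightarrow> u' j" for j
  proof (cases "j < k")
    case True
    then show ?thesis using u by (simp add: u'_def)
  next
    case False
    then have "s (r t) j = 0" for t using Rk_outside[OF assms(1)] by simp
    then show ?thesis using False by (simp add: u'_def)
  qed
  moreover have "u' \<in> Rk k" unfolding Rk_def u'_def by simp
  ultimately show ?thesis using r by blast
qed

lemma Rk_attains_sup:
  fixes f :: "(nat \<Rightarrow> real) \<Rightarrow> real"
  assumes ne: "K \<noteq> {}" and sub: "K \<subseteq> Rk k" and bnd: "\<And>u j. u \<in> K \<Longrightarrow> \<bar>u j\<bar> \<le> B"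
    and closed: "\<And>s u. (\<And>t. s t \<in> K) \<Longrightarrow> u \<in> Rk k \<Longrightarrow> (\<And>j. (\<lambda>t. s t j) \<longlonglongrightarrow> u j) \<Longrightarrow> u \<in> K"
    and cont: "\<And>s u. (\<And>j. (\<lambda>t. s t j) \<longlonglongrightarrow> u j) \<Longrightarrow> (\<lambda>t. f (s t)) \<longlonglongrightarrow> f u"
    and bdd: "bdd_above (f ` K)"
  shows "\<exists>u\<in>K. \<forall>w\<in>K. f w \<le> f u"
proof -
  define mu where "mu = Sup (f ` K)"
  have le_mu: "w \<in> K \<Longrightarrow> f w \<le> mu" for w
    unfolding mu_def using bdd by (intro cSup_upper) auto
  have "\<exists>u\<in>K. mu - inverse (real (Suc t)) < f u" for t
    using less_cSup_iff[of "f ` K" "mu - inverse (real (Suc t))"] ne bdd unfolding mu_def by auto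
  then obtain s where sK: "\<And>t. s t \<in> K" and s_gt: "\<And>t. mu - inverse (real (Suc t)) < f (s t)"
    by metis
  obtain r u where r: "strict_mono r" and uRk: "u \<in> Rk k" and lim: "\<forall>j. (\<lambda>t. s (r t) j) \<longlonglongrightarrow> u j"
    using bounded_Rk_convergent_subseq[of s k B] sK sub bnd by blast
  have uK: "u \<in> K" using closed[of "\<lambda>t. s (r t)", OF sK uRk] lim by blast
  have "(\<lambda>t. f (s (r t))) \<longlonglongrightarrow> f u" using cont[of "\<lambda>t. s (r t)"] lim by blast
  moreover have "(\<lambda>t. f (s (r t))) \<longlonglongrightarrow> mu"
  proof (rule tendsto_sandwich[of "\<lambda>t. mu - inverse (real (Suc (r t)))" _ _ "\<lambda>_. mu"])
    have "(\<lambda>t. inverse (real (Suc (r t)))) \<longlonglongrightarrow> 0"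
      using LIMSEQ_subseq_LIMSEQ[OF LIMSEQ_inverse_real_of_nat r] by (simp add: o_def)
    then show "(\<lambda>t. mu - inverse (real (Suc (r t)))) \<longlonglongrightarrow> mu"
      using tendsto_diff[OF tendsto_const, of _ 0 _ mu] by simp
    show "\<forall>\<^sub>F t in sequentially. mu - inverse (real (Suc (r t))) \<le> f (s (r t))"
      using s_gt by (intro always_eventually allI less_imp_le)
    show "\<forall>\<^sub>F t in sequentially. f (s (r t)) \<le> mu"
      using le_mu sK by (intro always_eventually allI) blast
  qed simp
  ultimately have "f u = mu" by (rule LIMSEQ_unique)
  then show ?thesis using uK le_mu by auto
qed

section \<open>Projection onto closed convex sets\<close>

lemma vclosedD_coordwise:
  assumes "vclosed k C" "\<And>t. s t \<in> C" "u \<in> Rk k" "\<And>j. (\<lambda>t. s t j) \<longlonglongrightarrow> u j"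
  shows "u \<in> C"
proof -
  have "(\<lambda>t. vnorm k (vsub (s t) u)) \<longlonglongrightarrow> 0" by (rule tendsto_vnorm_vsub_0) (rule assms(4))
  then show ?thesis using assms(1-3) unfolding vclosed_def by blast
qed

lemma vconvexD:
  "vconvex C \<Longrightarrow> u \<in> C \<Longrightarrow> w \<in> C \<Longrightarrow> 0 \<le> a \<Longrightarrow> a \<le> 1 \<Longrightarrow> (\<lambda>j. (1 - a) * u j + a * w j) \<in> C"
  unfolding vconvex_def by blast

lemma abs_coord_le_of_vnorm_vsub:
  assumes "p \<in> Rk k" "vnorm k (vsub z p) \<le> R"
  shows "\<bar>p j\<bar> \<le> (\<Sum>j<k. \<bar>z j\<bar>) + R"
proof (cases "j < k")
  case True
  have "\<bar>z j\<bar> \<le> (\<Sum>j<k. \<bar>z j\<bar>)" using True by (intro member_le_sum) auto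
  moreover have "\<bar>z j - p j\<bar> \<le> R"
    using abs_coord_le_vnorm[OF True, of "vsub z p"] assms(2) unfolding vsub_def by simp
  ultimately show ?thesis by linarith
next
  case False
  have "0 \<le> (\<Sum>j<k. \<bar>z j\<bar>) + R"
    using vnorm_nonneg[of k "vsub z p"] assms(2) by (intro add_nonneg_nonneg sum_nonneg) auto
  then show ?thesis using False Rk_outside[OF assms(1), of j] by simp
qed

lemma nearest_point_exists:
  assumes ne: "C \<noteq> {}" and sub: "C \<subseteq> Rk k" and cl: "vclosed k C"
  shows "\<exists>p\<in>C. \<forall>q\<in>C. vnorm k (vsub z p) \<le> vnorm k (vsub z q)"
proof -
  obtain p0 where p0: "p0 \<in> C" using ne by blast
  define R where "R = vnorm k (vsub z p0)"
  define K where "K = {p \<in> C. vnorm k (vsub z p) \<le> R}"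
  have bnd: "\<bar>p j\<bar> \<le> (\<Sum>j<k. \<bar>z j\<bar>) + R" if "p \<in> K" for p j
    using that sub by (intro abs_coord_le_of_vnorm_vsub) (auto simp: K_def)
  have closed: "u \<in> K" if s: "\<And>t. s t \<in> K" and u: "u \<in> Rk k" and lim: "\<And>j. (\<lambda>t. s t j) \<longlonglongrightarrow> u j"
    for s u
  proof -
    have "\<And>t. s t \<in> C" using s unfolding K_def by blast
    then have "u \<in> C" using vclosedD_coordwise[OF cl _ u lim] by blast
    moreover have "vnorm k (vsub z u) \<le> R"
    proof (rule LIMSEQ_le_const2)
      show "(\<lambda>t. vnorm k (vsub z (s t))) \<longlonglongrightarrow> vnorm k (vsub z u)"
        unfolding vsub_def by (intro tendsto_vnorm tendsto_diff tendsto_const lim)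
      show "\<exists>N. \<forall>t\<ge>N. vnorm k (vsub z (s t)) \<le> R" using s unfolding K_def by blast
    qed
    ultimately show ?thesis unfolding K_def by blast
  qed
  have cont: "(\<lambda>t. - vnorm k (vsub z (s t))) \<longlonglongrightarrow> - vnorm k (vsub z u)"
    if "\<And>j. (\<lambda>t. s t j) \<longlonglongrightarrow> u j" for s u
    unfolding vsub_def by (intro tendsto_minus tendsto_vnorm tendsto_diff tendsto_const that)
  have bdd: "bdd_above ((\<lambda>p. - vnorm k (vsub z p)) ` K)"
    by (rule bdd_aboveI[of _ 0]) (auto simp: vnorm_nonneg)
  have K: "K \<noteq> {}" "K \<subseteq> Rk k" using p0 sub unfolding K_def R_def by auto
  have "\<exists>p\<in>K. \<forall>w\<in>K. - vnorm k (vsub z w) \<le> - vnorm k (vsub z p)"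
    by (rule Rk_attains_sup[where f = "\<lambda>p. - vnorm k (vsub z p)" and B = "(\<Sum>j<k. \<bar>z j\<bar>) + R"])
      (fact K bnd closed cont bdd)+
  then obtain p where pK: "p \<in> K" and pmax: "\<forall>w\<in>K. vnorm k (vsub z p) \<le> vnorm k (vsub z w)"
    by auto
  have "vnorm k (vsub z p) \<le> vnorm k (vsub z q)" if "q \<in> C" for q
    using pmax pK that unfolding K_def by (cases "q \<in> K") (auto simp: K_def)
  then show ?thesis using pK unfolding K_def by blast
qed

lemma vinner_midpoint:
  "vinner k (vsub z (\<lambda>j. (1 - 1/2) * p j + 1/2 * p' j)) (vsub z (\<lambda>j. (1 - 1/2) * p j + 1/2 * p' j))
   = 1/2 * vinner k (vsub z p) (vsub z p) + 1/2 * vinner k (vsub z p') (vsub z p')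
     - 1/4 * vinner k (vsub p p') (vsub p p')"
  unfolding vinner_def vsub_def
  by (simp only: sum_distrib_left flip: sum.distrib sum_subtractf) (simp add: algebra_simps)

lemma vinner_segment:
  "vinner k (vsub z (\<lambda>j. (1 - a) * p j + a * q j)) (vsub z (\<lambda>j. (1 - a) * p j + a * q j))
   = vinner k (vsub z p) (vsub z p) - 2 * a * vinner k (vsub z p) (vsub q p)
     + a\<^sup>2 * vinner k (vsub q p) (vsub q p)"
  unfolding vinner_def vsub_def
  by (simp only: sum_distrib_left flip: sum.distrib sum_subtractf)
    (simp add: algebra_simps power2_eq_square)

lemma nearest_point_unique:
  assumes sub: "C \<subseteq> Rk k" and cv: "vconvex C"
    and p: "p \<in> C" "\<forall>q\<in>C. vnorm k (vsub z p) \<le> vnorm k (vsub z q)"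
    and p': "p' \<in> C" "\<forall>q\<in>C. vnorm k (vsub z p') \<le> vnorm k (vsub z q)"
  shows "p' = p"
proof -
  have vnorm_le: "vnorm k a \<le> vnorm k b \<longleftrightarrow> vinner k a a \<le> vinner k b b" for a b
    unfolding vnorm_def by simp
  have "(\<lambda>j. (1 - 1/2) * p j + 1/2 * p' j) \<in> C" by (rule vconvexD[OF cv p(1) p'(1)]) simp_all
  then have "vinner k (vsub p p') (vsub p p') \<le> 0"
    using p p' vinner_midpoint[of k z p p'] unfolding vnorm_le by fastforce
  then have "vinner k (vsub p p') (vsub p p') = 0" using vinner_self_nonneg by (rule antisym)
  then show ?thesis using Rk_eqI[of p k p'] p(1) p'(1) sub by auto
qed

text \<open>If the inner product were positive, moving from p towards q by a small step would bring
  the point closer to z.\<close>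

lemma nearest_point_variational:
  assumes cv: "vconvex C" and p: "p \<in> C" "\<forall>q\<in>C. vnorm k (vsub z p) \<le> vnorm k (vsub z q)"
    and q: "q \<in> C"
  shows "vinner k (vsub z p) (vsub q p) \<le> 0"
proof (rule ccontr)
  define X where "X = vinner k (vsub z p) (vsub q p)"
  define N where "N = vinner k (vsub q p) (vsub q p)"
  assume "\<not> vinner k (vsub z p) (vsub q p) \<le> 0"
  then have X0: "X > 0" unfolding X_def by simp
  have N0: "N \<ge> 0" unfolding N_def by (rule vinner_self_nonneg)
  define a where "a = min 1 (X / (N + 1))"
  have a0: "0 < a" and a1: "a \<le> 1" unfolding a_def using X0 N0 by auto
  have "(\<lambda>j. (1 - a) * p j + a * q j) \<in> C" using vconvexD[OF cv p(1) q] a0 a1 by simp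
  then have "vinner k (vsub z p) (vsub z p) \<le>
      vinner k (vsub z (\<lambda>j. (1 - a) * p j + a * q j)) (vsub z (\<lambda>j. (1 - a) * p j + a * q j))"
    using p(2) unfolding vnorm_def by auto
  then have "a * (2 * X) \<le> a * (a * N)"
    unfolding vinner_segment X_def N_def by (simp add: power2_eq_square algebra_simps)
  then have "2 * X \<le> a * N" using a0 by simp
  also have "\<dots> \<le> X / (N + 1) * N" unfolding a_def using N0 by (intro mult_right_mono) auto
  also have "\<dots> < X" using X0 N0 by (simp add: field_simps)
  finally show False using X0 by simp
qed

lemma vproj_nearest:
  assumes "C \<noteq> {}" "C \<subseteq> Rk k" "vclosed k C" "vconvex C"
  shows "vproj k C z \<in> C \<and> (\<forall>q\<in>C. vnorm k (vsub z (vproj k C z)) \<le> vnorm k (vsub z q))"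
proof -
  have "\<exists>!p. p \<in> C \<and> (\<forall>q\<in>C. vnorm k (vsub z p) \<le> vnorm k (vsub z q))"
    using nearest_point_exists[OF assms(1-3)] nearest_point_unique[OF assms(2,4)] by blast
  then show ?thesis unfolding vproj_def by (rule theI')
qed

lemma vproj_variational:
  assumes "C \<noteq> {}" "C \<subseteq> Rk k" "vclosed k C" "vconvex C" "q \<in> C"
  shows "vinner k (vsub z (vproj k C z)) (vsub q (vproj k C z)) \<le> 0"
  using nearest_point_variational[OF assms(4)] vproj_nearest[OF assms(1-4)] assms(5) by blast

section \<open>The largest eigenvalue of a symmetric matrix\<close>

lemma eigenvalues_finite: "finite {lam. \<exists>v\<in>Rk n. v \<noteq> (\<lambda>_. 0) \<and> mv n n M v = (\<lambda>j. lam * v j)}"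
proof -
  define MM where "MM = mat n n (\<lambda>(i,j). M i j)"
  have MMc: "MM \<in> carrier_mat n n" unfolding MM_def by simp
  have "char_poly MM \<noteq> 0" using degree_monic_char_poly[OF MMc] by auto
  then have fin: "finite {k. poly (char_poly MM) k = 0}" by (rule poly_roots_finite)
  have "eigenvalue MM lam" if v: "v \<in> Rk n" "v \<noteq> (\<lambda>_. 0)" "mv n n M v = (\<lambda>j. lam * v j)" for v lam
  proof -
    obtain j where vj: "v j \<noteq> 0" using v(2) by auto
    have jn: "j < n" using Rk_outside[OF v(1), of j] vj by (meson not_le)
    have "MM *\<^sub>v vec n v = lam \<cdot>\<^sub>v vec n v"
    proof (rule eq_vecI)
      fix i assume "i < dim_vec (lam \<cdot>\<^sub>v vec n v)"
      then have i: "i < n" by simp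
      have "(MM *\<^sub>v vec n v) $ i = mv n n M v i"
        using i by (simp add: MM_def scalar_prod_def row_def mv_def atLeast0LessThan)
      then show "(MM *\<^sub>v vec n v) $ i = (lam \<cdot>\<^sub>v vec n v) $ i" using i v(3) by simp
    qed (simp add: MM_def)
    moreover have "vec n v \<noteq> 0\<^sub>v n"
    proof
      assume "vec n v = 0\<^sub>v n"
      then have "vec n v $ j = 0\<^sub>v n $ j" by simp
      then show False using vj jn by simp
    qed
    ultimately have "eigenvector MM (vec n v) lam" using MMc unfolding eigenvector_def by simp
    then show ?thesis unfolding eigenvalue_def by blast
  qed
  then have "{lam. \<exists>v\<in>Rk n. v \<noteq> (\<lambda>_. 0) \<and> mv n n M v = (\<lambda>j. lam * v j)}
      \<subseteq> {k. poly (char_poly MM) k = 0}"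
    using eigenvalue_root_char_poly[OF MMc] by blast
  then show ?thesis using fin finite_subset by blast
qed

lemma quadratic_nonpos_imp_linear_coeff_0:
  fixes a b :: real
  assumes b: "b \<le> 0" and h: "\<And>s. 2 * s * a + s\<^sup>2 * b \<le> 0"
  shows "a = 0"
proof -
  define s where "s = a / (1 - b)"
  have a: "a = s * (1 - b)" using b unfolding s_def by simp
  have "s\<^sup>2 * (2 - b) \<le> 0" using h[of s] unfolding a by (simp add: power2_eq_square algebra_simps)
  then have "s = 0" using b by (simp add: mult_le_0_iff)
  then show ?thesis using a by simp
qed

lemma vinner_mv_symmetric:
  assumes "\<And>i j. M i j = M j i"
  shows "vinner n w (mv n n M u) = vinner n u (mv n n M w)"
proof -
  have "mtv n n M w = mv n n M w" unfolding mtv_def mv_def using assms by auto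
  then show ?thesis using vinner_mv_mtv[of n n M u w] vinner_commute by metis
qed

text \<open>Moving u0 by s w along the residual w = M u0 - mu u0 changes the nonpositive form
  Q - mu |.|^2 by 2 s |w|^2 + O(s^2), so w = 0.\<close>

lemma eigenvector_of_rayleigh_max:
  fixes M :: "nat \<Rightarrow> nat \<Rightarrow> real"
  assumes sym: "\<And>i j. M i j = M j i" and u0: "u0 \<in> Rk n"
    and bound: "\<And>u. u \<in> Rk n \<Longrightarrow> vinner n u (mv n n M u) \<le> mu * vinner n u u"
    and attained: "vinner n u0 (mv n n M u0) = mu * vinner n u0 u0"
  shows "mv n n M u0 = (\<lambda>j. mu * u0 j)"
proof -
  define w where "w = (\<lambda>j. mv n n M u0 j - mu * u0 j)"
  have wRk: "w \<in> Rk n" using u0 mv_Rk[of n n M u0] unfolding w_def Rk_def by auto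
  have ww: "vinner n w w = vinner n w (mv n n M u0) - mu * vinner n u0 w"
  proof -
    have "vinner n w w = vinner n w (\<lambda>j. mv n n M u0 j - mu * u0 j)"
      unfolding w_def[symmetric] by (rule refl)
    then show ?thesis by (simp only: vinner_diff_right vinner_scale_right vinner_commute[of n w u0])
  qed
  define b where "b = vinner n w (mv n n M w) - mu * vinner n w w"
  have "b \<le> 0" unfolding b_def using bound[OF wRk] by simp
  moreover have "2 * s * vinner n w w + s\<^sup>2 * b \<le> 0" for s
  proof -
    define v where "v = (\<lambda>j. u0 j + s * w j)"
    have Qv: "vinner n v (mv n n M v) = vinner n u0 (mv n n M u0)
        + 2 * s * vinner n w (mv n n M u0) + s\<^sup>2 * vinner n w (mv n n M w)"
      unfolding v_def using vinner_mv_symmetric[OF sym, where n = n and w = u0 and u = w]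
      by (simp add: mv_add mv_scale vinner_linear power2_eq_square algebra_simps)
    have Nv: "vinner n v v = vinner n u0 u0 + 2 * s * vinner n u0 w + s\<^sup>2 * vinner n w w"
      unfolding v_def by (simp add: vinner_linear vinner_commute[of n w u0] power2_eq_square algebra_simps)
    have "v \<in> Rk n" using u0 wRk unfolding v_def Rk_def by auto
    then have "vinner n v (mv n n M v) - mu * vinner n v v \<le> 0" using bound by simp
    moreover have "vinner n v (mv n n M v) - mu * vinner n v v = 2 * s * vinner n w w + s\<^sup>2 * b"
      unfolding Qv Nv ww b_def using attained by (simp add: algebra_simps)
    ultimately show ?thesis by simp
  qed
  ultimately have "vinner n w w = 0" by (rule quadratic_nonpos_imp_linear_coeff_0)
  moreover have "(\<lambda>j. mu * u0 j) \<in> Rk n" using u0 unfolding Rk_def by simp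
  ultimately show ?thesis using Rk_eqI[OF mv_Rk] unfolding w_def vsub_def by blast
qed

lemma quadratic_form_le_by_homogeneity:
  assumes unit: "\<And>w. w \<in> Rk n \<Longrightarrow> vinner n w w = 1 \<Longrightarrow> vinner n w (mv n n M w) \<le> mu"
    and u: "u \<in> Rk n"
  shows "vinner n u (mv n n M u) \<le> mu * vinner n u u"
proof (cases "vinner n u u = 0")
  case True
  then have "u = (\<lambda>_. 0)" using Rk_eqI[OF u, of "\<lambda>_. 0"] unfolding Rk_def vsub_def by simp
  then show ?thesis by (simp add: vinner_def)
next
  case False
  define N where "N = vinner n u u"
  have N0: "N > 0" using False vinner_self_nonneg[of n u] unfolding N_def by linarith
  define c where "c = inverse (sqrt N)"
  have cc: "c * c * N = 1" unfolding c_def using N0 by (simp add: field_simps)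
  have "vinner n (\<lambda>j. c * u j) (\<lambda>j. c * u j) = c * c * N"
    unfolding N_def by (simp add: vinner_linear mult.assoc)
  then have "vinner n (\<lambda>j. c * u j) (mv n n M (\<lambda>j. c * u j)) \<le> mu"
    using u cc by (intro unit) (auto simp: Rk_def)
  then have "N * (c * c * vinner n u (mv n n M u)) \<le> N * mu"
    using N0 by (simp add: vinner_linear mv_scale mult.assoc)
  moreover have "N * (c * c * vinner n u (mv n n M u)) = (c * c * N) * vinner n u (mv n n M u)"
    by (simp add: mult_ac)
  ultimately have "(c * c * N) * vinner n u (mv n n M u) \<le> N * mu" by simp
  then have "vinner n u (mv n n M u) \<le> N * mu" unfolding cc by simp
  then show ?thesis unfolding N_def by (simp add: mult.commute)
qed

lemma quadratic_form_le_abs_sum: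
  assumes "\<And>j. \<bar>u j\<bar> \<le> 1"
  shows "vinner n u (mv n n M u) \<le> (\<Sum>j<n. \<Sum>k<n. \<bar>M j k\<bar>)"
proof -
  have "vinner n u (mv n n M u) = (\<Sum>j<n. \<Sum>k<n. u j * M j k * u k)"
    unfolding vinner_def mv_def by (simp add: sum_distrib_left mult.assoc)
  also have "\<dots> \<le> (\<Sum>j<n. \<Sum>k<n. \<bar>M j k\<bar>)"
  proof (intro sum_mono)
    fix j k
    have "\<bar>u j\<bar> * \<bar>M j k\<bar> * \<bar>u k\<bar> \<le> 1 * \<bar>M j k\<bar> * 1"
      using assms by (intro mult_mono) auto
    then show "u j * M j k * u k \<le> \<bar>M j k\<bar>"
      using abs_ge_self[of "u j * M j k * u k"] by (simp add: abs_mult)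
  qed
  finally show ?thesis .
qed

lemma quadratic_form_sphere_max_exists:
  assumes n: "n \<ge> 1"
  shows "\<exists>u0\<in>Rk n. vinner n u0 u0 = 1 \<and>
           (\<forall>w\<in>Rk n. vinner n w w = 1 \<longrightarrow> vinner n w (mv n n M w) \<le> vinner n u0 (mv n n M u0))"
proof -
  define Q where "Q u = vinner n u (mv n n M u)" for u
  define K where "K = {u \<in> Rk n. vinner n u u = 1}"
  have unit_bound: "\<bar>u j\<bar> \<le> 1" if "u \<in> K" for u j
    using abs_coord_le_of_vnorm_vsub[of u n "\<lambda>_. 0" 1 j] that
    unfolding K_def vsub_def vnorm_def by (simp add: vinner_def)
  have "(\<lambda>j. if j = 0 then 1 else 0) \<in> K"
    using n vinner_unit_left[of 0 n] unfolding K_def Rk_def by simp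
  then have ne: "K \<noteq> {}" by blast
  have K_sub: "K \<subseteq> Rk n" unfolding K_def by blast
  have closed: "u \<in> K" if s: "\<And>t. s t \<in> K" and u: "u \<in> Rk n" and lim: "\<And>j. (\<lambda>t. s t j) \<longlonglongrightarrow> u j"
    for s u
  proof -
    have "(\<lambda>t. vinner n (s t) (s t)) \<longlonglongrightarrow> vinner n u u" by (intro tendsto_vinner lim)
    moreover have "(\<lambda>t. vinner n (s t) (s t)) = (\<lambda>t. 1)" using s unfolding K_def by simp
    ultimately have "vinner n u u = 1" using LIMSEQ_unique by (metis tendsto_const)
    then show ?thesis using u unfolding K_def by blast
  qed
  have cont: "(\<lambda>t. Q (s t)) \<longlonglongrightarrow> Q u" if "\<And>j. (\<lambda>t. s t j) \<longlonglongrightarrow> u j" for s u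
    unfolding Q_def by (intro tendsto_vinner tendsto_mv that)
  have "Q u \<le> (\<Sum>j<n. \<Sum>k<n. \<bar>M j k\<bar>)" if "u \<in> K" for u
    unfolding Q_def using unit_bound[OF that] by (rule quadratic_form_le_abs_sum)
  then have bdd: "bdd_above (Q ` K)" by (intro bdd_aboveI2) auto
  have "\<exists>u0\<in>K. \<forall>w\<in>K. Q w \<le> Q u0"
    by (rule Rk_attains_sup[where f = Q]) (fact ne K_sub unit_bound closed cont bdd)+
  then show ?thesis unfolding K_def Q_def by blast
qed

lemma quadratic_form_le_lam_max:
  assumes n: "n \<ge> 1" and sym: "\<And>i j. M i j = M j i" and u: "u \<in> Rk n"
  shows "vinner n u (mv n n M u) \<le> lam_max n M * vinner n u u"
proof -
  obtain u0 where u0: "u0 \<in> Rk n" "vinner n u0 u0 = 1"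
    and max: "\<forall>w\<in>Rk n. vinner n w w = 1 \<longrightarrow> vinner n w (mv n n M w) \<le> vinner n u0 (mv n n M u0)"
    using quadratic_form_sphere_max_exists[OF n] by blast
  define mu where "mu = vinner n u0 (mv n n M u0)"
  have bound: "vinner n w (mv n n M w) \<le> mu * vinner n w w" if "w \<in> Rk n" for w
    using quadratic_form_le_by_homogeneity[OF _ that] max unfolding mu_def by blast
  have "mv n n M u0 = (\<lambda>j. mu * u0 j)"
    using eigenvector_of_rayleigh_max[OF sym u0(1), where mu = mu] bound u0(2) unfolding mu_def by simp
  moreover have "u0 \<noteq> (\<lambda>_. 0)" using u0(2) by (auto simp: vinner_def)
  ultimately have "mu \<le> lam_max n M"
    unfolding lam_max_def using u0(1) eigenvalues_finite by (intro Max_ge) auto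
  then show ?thesis using bound[OF u]
    by (meson mult_right_mono order_trans vinner_self_nonneg)
qed

lemma lam_max_mtm_pos:
  assumes "r < m" "c < n" "A r c \<noteq> 0"
  shows "lam_max n (mtm m n A) > 0"
proof -
  define e where "e = (\<lambda>j::nat. if j = c then (1::real) else 0)"
  have mv_e: "mv n n (mtm m n A) e j = (if j < n then mtm m n A j c else 0)" for j
    using vinner_unit_left[OF assms(2), of "mtm m n A j"]
    unfolding mv_def e_def vinner_def by (simp add: mult.commute)
  have e: "e \<in> Rk n" "vinner n e e = 1"
    using assms(2) vinner_unit_left[OF assms(2)] unfolding e_def Rk_def by auto
  have "vinner n e (mv n n (mtm m n A) e) = mtm m n A c c"
    unfolding mv_e unfolding e_def using vinner_unit_left[OF assms(2)] assms(2) by simp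
  have "A r c * A r c \<le> mtm m n A c c" unfolding mtm_def using assms(1) by (intro member_le_sum) auto
  also have "\<dots> \<le> lam_max n (mtm m n A)"
    using quadratic_form_le_lam_max[of n "mtm m n A" e] e \<open>vinner n e (mv n n (mtm m n A) e) = _\<close> assms(2)
    by (simp add: mtm_def mult.commute)
  finally show ?thesis using assms(3) by (metis not_real_square_gt_zero order_less_le_trans)
qed

lemma vinner_mtv_le_lam_max:
  assumes "r < m" "c < n" "A r c \<noteq> 0"
  shows "vinner n (mtv m n A w) (mtv m n A w) \<le> lam_max n (mtm m n A) * vinner m w w"
proof -
  define gm where "gm = lam_max n (mtm m n A)"
  have gm: "gm > 0" unfolding gm_def using lam_max_mtm_pos[of r m c n A] assms by blast
  define u where "u = mtv m n A w"
  define a where "a = mv m n A u"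
  have aw: "vinner m a w = vinner n u u" unfolding a_def u_def by (simp add: vinner_mv_mtv)
  have sym: "\<And>i j. mtm m n A i j = mtm m n A j i" unfolding mtm_def by (simp add: mult.commute)
  have "n \<ge> 1" using assms(2) by simp
  from quadratic_form_le_lam_max[of n "mtm m n A", OF this sym mtv_Rk[of m n A w]]
  have aa: "vinner m a a \<le> gm * vinner n u u"
    unfolding a_def u_def gm_def vinner_mv_mtm by (simp add: mult.commute)
  have "0 \<le> vinner m (\<lambda>j. a j - gm * w j) (\<lambda>j. a j - gm * w j)" by (rule vinner_self_nonneg)
  also have "\<dots> = vinner m a a - 2 * gm * vinner m a w + gm * gm * vinner m w w"
    by (simp add: vinner_linear vinner_commute[of m w a] algebra_simps)
  finally have "gm * vinner n u u \<le> gm * (gm * vinner m w w)" using aw aa by (simp add: algebra_simps)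
  then show ?thesis using gm unfolding u_def gm_def by simp
qed

section \<open>Support functions and block vectors\<close>

lemma supp_attained:
  assumes "P \<in> C" "\<And>q. q \<in> C \<Longrightarrow> vinner k Y q \<le> vinner k Y P"
  shows "supp k C Y = ereal (vinner k Y P)"
  unfolding supp_def
proof (rule antisym)
  show "(SUP u\<in>C. ereal (vinner k Y u)) \<le> ereal (vinner k Y P)"
    using assms(2) by (intro SUP_least) simp
  show "ereal (vinner k Y P) \<le> (SUP u\<in>C. ereal (vinner k Y u))"
    by (rule SUP_upper2[OF assms(1)]) simp
qed

lemma supp_ge: "q \<in> C \<Longrightarrow> ereal (vinner k Y q) \<le> supp k C Y"
  unfolding supp_def by (rule SUP_upper)

lemma sigD_eq_sum:
  assumes "\<And>j. j \<in> {1..l} \<Longrightarrow> supp (ms j) (C j) (Y j) = ereal (f j)"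
  shows "sigD l ms C Y = ereal (\<Sum>j=1..l. f j)"
proof -
  have "sigD l ms C Y = (\<Sum>j=1..l. ereal (f j))" unfolding sigD_def using assms by simp
  then show ?thesis by (simp add: sum_ereal)
qed

lemma dfun_eq_sum:
  assumes "\<And>j. j \<in> {1..l} \<Longrightarrow> supp (ms j) (C j) (Y j) = ereal (f j)"
  shows "dfun l ms n A v C Y = ereal (gfun l ms n A v Y + (\<Sum>j=1..l. f j))"
  unfolding dfun_def using sigD_eq_sum[OF assms] by simp

lemma BS_outside:
  assumes "Y \<in> BS l ms" "\<not> (j \<in> {1..l} \<and> k < ms j)"
  shows "Y j k = 0"
proof (cases "j \<in> {1..l}")
  case True
  then show ?thesis using assms Rk_outside[of "Y j" "ms j" k] unfolding BS_def by auto
qed (use assms in \<open>auto simp: BS_def\<close>)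

lemma binner_self_nonneg: "0 \<le> binner l ms Y Y"
  unfolding binner_def by (simp add: sum_nonneg vinner_self_nonneg)

lemma bnorm_nonneg: "0 \<le> bnorm l ms Y"
  unfolding bnorm_def using binner_self_nonneg by simp

lemma bnorm_power2: "(bnorm l ms Y)\<^sup>2 = binner l ms Y Y"
  unfolding bnorm_def using binner_self_nonneg by simp

lemma abs_coord_diff_le_bnorm:
  assumes "Y \<in> BS l ms" "Z \<in> BS l ms"
  shows "\<bar>Y j k - Z j k\<bar> \<le> bnorm l ms (bsub Y Z)"
proof (cases "j \<in> {1..l} \<and> k < ms j")
  case True
  have "\<bar>Y j k - Z j k\<bar> \<le> vnorm (ms j) (vsub (Y j) (Z j))"
    using abs_coord_le_vnorm[of k "ms j" "vsub (Y j) (Z j)"] True by (simp add: vsub_def)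
  also have "\<dots> \<le> bnorm l ms (bsub Y Z)" unfolding vnorm_def bnorm_def binner_def bsub_def
    using True by (intro real_sqrt_le_mono member_le_sum) (auto simp: vinner_self_nonneg)
  finally show ?thesis .
next
  case False
  then show ?thesis using BS_outside[OF assms(1) False] BS_outside[OF assms(2) False] bnorm_nonneg
    by simp
qed

lemma tendsto_coord_diff_0:
  assumes "\<And>t. F t \<in> BS l ms" "\<And>t. G t \<in> BS l ms"
    and "(\<lambda>t. bnorm l ms (bsub (F t) (G t))) \<longlonglongrightarrow> 0"
  shows "(\<lambda>t. F t j k - G t j k) \<longlonglongrightarrow> 0"
proof (rule tendsto_0_le[OF assms(3), where K = 1])
  have "norm (F t j k - G t j k) \<le> norm (bnorm l ms (bsub (F t) (G t))) * 1" for t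
    using abs_coord_diff_le_bnorm[OF assms(1)[of t] assms(2)[of t], of j k] by simp
  then show "\<forall>\<^sub>F t in sequentially. norm (F t j k - G t j k) \<le> norm (bnorm l ms (bsub (F t) (G t))) * 1"
    by (intro always_eventually allI)
qed

lemma tendsto_bnorm_0:
  assumes "\<And>i k. (\<lambda>t. F t i k) \<longlonglongrightarrow> 0"
  shows "(\<lambda>t. bnorm l ms (F t)) \<longlonglongrightarrow> 0"
proof -
  have "(\<lambda>t. \<Sum>i=1..l. \<Sum>k<ms i. F t i k * F t i k) \<longlonglongrightarrow> (\<Sum>i=1..l. \<Sum>k<ms i. (0::real) * 0)"
    by (intro tendsto_sum tendsto_mult assms)
  then have "(\<lambda>t. sqrt (\<Sum>i=1..l. \<Sum>k<ms i. F t i k * F t i k)) \<longlonglongrightarrow> sqrt 0"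
    by (intro tendsto_real_sqrt) simp
  then show ?thesis unfolding bnorm_def binner_def vinner_def by simp
qed

lemma AtY_bsub: "AtY l ms n A (bsub Y Z) c = AtY l ms n A Y c - AtY l ms n A Z c"
  unfolding AtY_def bsub_def vsub_def by (simp add: mtv_diff sum_subtractf)

lemma AtY_single_block:
  assumes i: "i \<in> {1..l}" and W: "\<And>j. j \<noteq> i \<Longrightarrow> W j = (\<lambda>_. 0)"
  shows "AtY l ms n A W = mtv (ms i) n (A i) (W i)"
proof (rule ext)
  fix c
  have "AtY l ms n A W c = (\<Sum>j=1..l. if j = i then mtv (ms i) n (A i) (W i) c else 0)"
    unfolding AtY_def using W by (intro sum.cong) (auto simp: mtv_zero)
  then show "AtY l ms n A W c = mtv (ms i) n (A i) (W i) c" using i by simp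
qed

lemma vinner_AtY:
  "vinner n a (AtY l ms n A W) = (\<Sum>i=1..l. vinner (ms i) (mv (ms i) n (A i) a) (W i))"
proof -
  have "vinner n a (AtY l ms n A W) = (\<Sum>i=1..l. vinner n a (mtv (ms i) n (A i) (W i)))"
    unfolding vinner_def AtY_def sum_distrib_left by (rule sum.swap)
  then show ?thesis by (simp add: vinner_mv_mtv)
qed

lemma tendsto_AtY:
  "(\<And>i j. (\<lambda>t. W t i j) \<longlonglongrightarrow> W0 i j) \<Longrightarrow> (\<lambda>t. AtY l ms n A (W t) c) \<longlonglongrightarrow> AtY l ms n A W0 c"
  unfolding AtY_def by (intro tendsto_sum tendsto_mtv)

lemma gfun_expansion:
  "gfun l ms n A v Z = gfun l ms n A v Y
     + vinner n (vsub (AtY l ms n A Y) v) (AtY l ms n A (bsub Z Y))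
     + 1/2 * vinner n (AtY l ms n A (bsub Z Y)) (AtY l ms n A (bsub Z Y))"
proof -
  have "vsub (AtY l ms n A Z) v = (\<lambda>c. vsub (AtY l ms n A Y) v c + AtY l ms n A (bsub Z Y) c)"
    by (rule ext) (simp add: vsub_def AtY_bsub)
  then show ?thesis unfolding gfun_def vnorm_power2
    by (simp add: vinner_add_self vinner_commute[of n "AtY l ms n A (bsub Z Y)" "vsub (AtY l ms n A Y) v"] algebra_simps)
qed

lemma gfun_block_update:
  assumes i: "i \<in> {1..l}" and Z: "\<And>j. j \<noteq> i \<Longrightarrow> Z j = Y j"
  shows "gfun l ms n A v Z = gfun l ms n A v Y
     + vinner (ms i) (gradg l ms n A v i Y) (vsub (Z i) (Y i))
     + 1/2 * vinner n (mtv (ms i) n (A i) (vsub (Z i) (Y i))) (mtv (ms i) n (A i) (vsub (Z i) (Y i)))"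
proof -
  have "AtY l ms n A (bsub Z Y) = mtv (ms i) n (A i) (vsub (Z i) (Y i))"
    using AtY_single_block[OF i, of "bsub Z Y"] Z by (simp add: bsub_def vsub_def)
  then show ?thesis
    using gfun_expansion[of l ms n A v Z Y] unfolding gradg_def by (simp add: vinner_mv_mtv)
qed

lemma gfun_plus_inner_ge:
  "vinner n z v - 1/2 * vinner n z z - 1/2 * vinner n v v
     \<le> gfun l ms n A v Y + (\<Sum>i=1..l. vinner (ms i) (Y i) (mv (ms i) n (A i) z))"
proof -
  define u where "u = vsub (AtY l ms n A Y) v"
  have "(\<Sum>i=1..l. vinner (ms i) (Y i) (mv (ms i) n (A i) z)) = vinner n z u + vinner n z v"
    unfolding u_def vsub_def by (simp add: vinner_AtY vinner_diff_right vinner_commute)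
  moreover have "0 \<le> vinner n (\<lambda>c. u c + z c) (\<lambda>c. u c + z c)" by (rule vinner_self_nonneg)
  ultimately show ?thesis
    unfolding gfun_def vnorm_power2 u_def[symmetric] vinner_add_self vinner_commute[of n u z] by simp
qed

definition block_subgrad :: "nat \<Rightarrow> (nat \<Rightarrow> nat) \<Rightarrow> nat \<Rightarrow> (nat \<Rightarrow> nat \<Rightarrow> nat \<Rightarrow> real)
    \<Rightarrow> (nat \<Rightarrow> real) \<Rightarrow> (nat \<Rightarrow> nat \<Rightarrow> real) \<Rightarrow> (nat \<Rightarrow> nat \<Rightarrow> real) \<Rightarrow> (nat \<Rightarrow> nat \<Rightarrow> real)"
  where "block_subgrad l ms n A v P Y =
    (\<lambda>i. if i \<in> {1..l} then (\<lambda>k. gradg l ms n A v i Y k + P i k) else (\<lambda>_. 0))"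

lemma binner_block_subgrad:
  "binner l ms (block_subgrad l ms n A v P Y) (bsub Z Y)
     = vinner n (vsub (AtY l ms n A Y) v) (AtY l ms n A (bsub Z Y))
       + (\<Sum>i=1..l. vinner (ms i) (Z i) (P i)) - (\<Sum>i=1..l. vinner (ms i) (Y i) (P i))"
proof -
  define a where "a = vsub (AtY l ms n A Y) v"
  have "binner l ms (block_subgrad l ms n A v P Y) (bsub Z Y)
      = (\<Sum>i=1..l. vinner (ms i) (mv (ms i) n (A i) a) (bsub Z Y i) + vinner (ms i) (P i) (bsub Z Y i))"
    unfolding binner_def block_subgrad_def gradg_def a_def by (intro sum.cong) (auto simp: vinner_add_left)
  also have "\<dots> = vinner n a (AtY l ms n A (bsub Z Y))
      + (\<Sum>i=1..l. vinner (ms i) (Z i) (P i)) - (\<Sum>i=1..l. vinner (ms i) (Y i) (P i))"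
    unfolding sum.distrib vinner_AtY bsub_def vsub_def
    by (simp add: vinner_diff_right vinner_commute sum_subtractf)
  finally show ?thesis unfolding a_def .
qed

lemma block_subgrad_in_subdiff:
  assumes Y: "Y \<in> BS l ms"
    and P: "\<And>i. i \<in> {1..l} \<Longrightarrow> P i \<in> C i" "\<And>i. i \<in> {1..l} \<Longrightarrow> P i \<in> Rk (ms i)"
    and max: "\<And>i q. i \<in> {1..l} \<Longrightarrow> q \<in> C i \<Longrightarrow> vinner (ms i) (Y i) q \<le> vinner (ms i) (Y i) (P i)"
  shows "block_subgrad l ms n A v P Y \<in> subdiff l ms (dfun l ms n A v C) Y"
proof -
  define S where "S = block_subgrad l ms n A v P Y"
  have "S \<in> BS l ms"
    using P(2) unfolding BS_def S_def block_subgrad_def Rk_def gradg_def mv_def by auto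
  define SY where "SY = (\<Sum>i=1..l. vinner (ms i) (Y i) (P i))"
  have dY: "dfun l ms n A v C Y = ereal (gfun l ms n A v Y + SY)"
    unfolding SY_def using P(1) max by (intro dfun_eq_sum supp_attained)
  have "dfun l ms n A v C Y + ereal (binner l ms S (bsub Z Y)) \<le> dfun l ms n A v C Z"
    if Z: "Z \<in> BS l ms" for Z
  proof -
    define SZ where "SZ = (\<Sum>i=1..l. vinner (ms i) (Z i) (P i))"
    have "(\<Sum>i=1..l. ereal (vinner (ms i) (Z i) (P i))) \<le> (\<Sum>i=1..l. supp (ms i) (C i) (Z i))"
      using P(1) by (intro sum_mono supp_ge) auto
    then have "ereal SZ \<le> sigD l ms C Z" unfolding SZ_def sigD_def by (simp add: sum_ereal)
    then have dZ: "ereal (gfun l ms n A v Z + SZ) \<le> dfun l ms n A v C Z"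
      unfolding dfun_def using add_left_mono[of "ereal SZ" _ "ereal (gfun l ms n A v Z)"] by simp
    have "gfun l ms n A v Y + SY + binner l ms S (bsub Z Y) \<le> gfun l ms n A v Z + SZ"
      using gfun_expansion[of l ms n A v Z Y] vinner_self_nonneg[of n "AtY l ms n A (bsub Z Y)"]
      unfolding S_def binner_block_subgrad SY_def SZ_def by simp
    then show ?thesis unfolding dY by (intro order_trans[OF _ dZ]) simp
  qed
  then show ?thesis using \<open>S \<in> BS l ms\<close> dY unfolding subdiff_def S_def by simp
qed

lemma zero_subgrad_imp_min:
  assumes "S \<in> subdiff l ms f Y" "\<And>i k. S i k = 0" "Z \<in> BS l ms"
  shows "f Y \<le> f Z"
proof -
  have "binner l ms S (bsub Z Y) = 0" unfolding binner_def vinner_def using assms(2) by simp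
  then show ?thesis using assms(1,3) unfolding subdiff_def by (auto simp: zero_ereal_def[symmetric])
qed

lemma sum_mix_diff:
  fixes f g :: "nat \<Rightarrow> real"
  assumes "i \<in> {1..l}"
  shows "(\<Sum>j=1..l. if j \<le> i then f j else g j) - (\<Sum>j=1..l. if j \<le> i - 1 then f j else g j) = f i - g i"
proof -
  have "(\<Sum>j=1..l. if j \<le> i then f j else g j) - (\<Sum>j=1..l. if j \<le> i - 1 then f j else g j)
      = (\<Sum>j=1..l. if j = i then f i - g i else 0)"
    unfolding sum_subtractf[symmetric] using assms by (intro sum.cong) auto
  then show ?thesis using assms by simp
qed

lemma sum_telescope_1:
  fixes f :: "nat \<Rightarrow> real" and l :: nat
  shows "(\<Sum>i=1..l. f i - f (i - 1)) = f l - f 0"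
  by (induction l) (simp_all add: sum.cl_ivl_Suc)

section \<open>The iteration as block-coordinate descent on d\<close>

locale dual_block_iteration =
  fixes l n :: nat
    and ms :: "nat \<Rightarrow> nat"
    and C :: "nat \<Rightarrow> (nat \<Rightarrow> real) set"
    and A :: "nat \<Rightarrow> nat \<Rightarrow> nat \<Rightarrow> real"
    and vbar :: "nat \<Rightarrow> real"
    and gam :: "nat \<Rightarrow> real"
    and x :: "nat \<Rightarrow> nat \<Rightarrow> nat \<Rightarrow> real"
    and y :: "nat \<Rightarrow> nat \<Rightarrow> nat \<Rightarrow> real"
  assumes hl: "l \<ge> 1"
    and hC: "\<forall>i\<in>{1..l}. C i \<noteq> {} \<and> C i \<subseteq> Rk (ms i) \<and> vclosed (ms i) (C i) \<and> vconvex (C i)"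
    and hA: "\<forall>i\<in>{1..l}. \<exists>r<ms i. \<exists>c<n. A i r c \<noteq> 0"
    and hint: "\<exists>z\<in>Rk n. \<forall>i\<in>{1..l}. mv (ms i) n (A i) z \<in> C i"
    and hgam: "\<forall>i\<in>{1..l}. gam i = lam_max n (mtm (ms i) n (A i))"
    and hy0: "\<forall>i\<in>{1..l}. y 0 i = (\<lambda>_. 0)"
    and hpad: "\<forall>t i. i \<notin> {1..l} \<longrightarrow> y t i = (\<lambda>_. 0)"
    and hx0: "x 0 l = vbar"
    and hxs: "\<forall>t. x (Suc t) 0 = x t l"
    and hxi: "\<forall>t. \<forall>i\<in>{1..l}. x (Suc t) i =
         (\<lambda>j. x (Suc t) (i - 1) j
               - (1 / gam i) * mtv (ms i) n (A i) (mv (ms i) n (A i) (x (Suc t) (i - 1))) j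
               + (1 / gam i) * mtv (ms i) n (A i)
                   (vproj (ms i) (C i) (\<lambda>k. gam i * y t i k + mv (ms i) n (A i) (x (Suc t) (i - 1)) k)) j)"
    and hyi: "\<forall>t. \<forall>i\<in>{1..l}. y (Suc t) i =
         (\<lambda>k. y t i k + (1 / gam i) * mv (ms i) n (A i) (x (Suc t) (i - 1)) k
               - (1 / gam i) * vproj (ms i) (C i)
                   (\<lambda>k'. gam i * y t i k' + mv (ms i) n (A i) (x (Suc t) (i - 1)) k') k)"
begin

abbreviation ymix :: "nat \<Rightarrow> nat \<Rightarrow> nat \<Rightarrow> nat \<Rightarrow> real" where
  "ymix t i \<equiv> mixb (y (Suc t)) (y t) i"

definition proj_pt :: "nat \<Rightarrow> nat \<Rightarrow> nat \<Rightarrow> real" where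
  "proj_pt t i = vproj (ms i) (C i) (\<lambda>k. gam i * y t i k + mv (ms i) n (A i) (x (Suc t) (i - 1)) k)"

text \<open>sigma_{C_i}(y^t_i); for t > 0 the supremum is attained at the previous projection point
  (supp_y_eq).\<close>

definition supp_y :: "nat \<Rightarrow> nat \<Rightarrow> real" where
  "supp_y t i = (if t = 0 then 0 else vinner (ms i) (y t i) (proj_pt (t - 1) i))"

definition d_mix :: "nat \<Rightarrow> nat \<Rightarrow> real" where
  "d_mix t i = gfun l ms n A vbar (ymix t i) + (\<Sum>j=1..l. if j \<le> i then supp_y (Suc t) j else supp_y t j)"

definition d_y :: "nat \<Rightarrow> real" where
  "d_y t = gfun l ms n A vbar (y t) + (\<Sum>j=1..l. supp_y t j)"

lemma C_props:
  assumes "i \<in> {1..l}"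
  shows "C i \<noteq> {}" "C i \<subseteq> Rk (ms i)" "vclosed (ms i) (C i)" "vconvex (C i)"
  using hC assms by auto

lemma gam_pos: assumes i: "i \<in> {1..l}" shows "gam i > 0"
proof -
  obtain r c where "r < ms i" "c < n" "A i r c \<noteq> 0" using hA i by blast
  then show ?thesis using hgam i lam_max_mtm_pos[of r "ms i" c n "A i"] by simp
qed

lemma gam_bound:
  assumes i: "i \<in> {1..l}"
  shows "vinner n (mtv (ms i) n (A i) w) (mtv (ms i) n (A i) w) \<le> gam i * vinner (ms i) w w"
proof -
  obtain r c where "r < ms i" "c < n" "A i r c \<noteq> 0" using hA i by blast
  then show ?thesis using hgam i vinner_mtv_le_lam_max[of r "ms i" c n "A i" w] by simp
qed

lemma proj_pt_in_C: "i \<in> {1..l} \<Longrightarrow> proj_pt t i \<in> C i"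
  unfolding proj_pt_def using vproj_nearest[OF C_props] by blast

lemma proj_pt_Rk: "i \<in> {1..l} \<Longrightarrow> proj_pt t i \<in> Rk (ms i)"
  using proj_pt_in_C C_props(2) by blast

lemma proj_pt_eq:
  assumes i: "i \<in> {1..l}"
  shows "proj_pt t i k = gam i * y t i k + mv (ms i) n (A i) (x (Suc t) (i - 1)) k - gam i * y (Suc t) i k"
proof -
  define W where "W = mv (ms i) n (A i) (x (Suc t) (i - 1)) k"
  have "y (Suc t) i k = y t i k + (1 / gam i) * W - (1 / gam i) * proj_pt t i k"
    using hyi i unfolding proj_pt_def W_def by simp
  then have "gam i * y (Suc t) i k = gam i * (y t i k + (1 / gam i) * W - (1 / gam i) * proj_pt t i k)"
    by simp
  also have "\<dots> = gam i * y t i k + W - proj_pt t i k" using gam_pos[OF i] by (simp add: field_simps)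
  finally show ?thesis unfolding W_def by simp
qed

lemma y_Rk: "i \<in> {1..l} \<Longrightarrow> y t i \<in> Rk (ms i)"
proof (induction t)
  case 0
  then show ?case using hy0 unfolding Rk_def by simp
next
  case (Suc t)
  have "y (Suc t) i k = 0" if "ms i \<le> k" for k
    using proj_pt_eq[OF Suc.prems, of t k] gam_pos[OF Suc.prems] that
      Rk_outside[OF Suc.IH[OF Suc.prems]] Rk_outside[OF mv_Rk] Rk_outside[OF proj_pt_Rk[OF Suc.prems]]
    by simp
  then show ?case unfolding Rk_def by blast
qed

lemma y_BS: "y t \<in> BS l ms"
  unfolding BS_def using y_Rk hpad by auto

lemma y_Suc_max:
  assumes i: "i \<in> {1..l}" and q: "q \<in> C i"
  shows "vinner (ms i) (y (Suc t) i) q \<le> vinner (ms i) (y (Suc t) i) (proj_pt t i)"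
proof -
  have "vsub (\<lambda>k. gam i * y t i k + mv (ms i) n (A i) (x (Suc t) (i - 1)) k) (proj_pt t i)
      = (\<lambda>k. gam i * y (Suc t) i k)"
    unfolding vsub_def using proj_pt_eq[OF i] by simp
  then have "vinner (ms i) (\<lambda>k. gam i * y (Suc t) i k) (vsub q (proj_pt t i)) \<le> 0"
    using vproj_variational[OF C_props[OF i] q] unfolding proj_pt_def by metis
  then have "gam i * (vinner (ms i) (y (Suc t) i) q - vinner (ms i) (y (Suc t) i) (proj_pt t i)) \<le> 0"
    unfolding vsub_def by (simp add: vinner_linear)
  then show ?thesis using gam_pos[OF i] by (simp add: mult_le_0_iff)
qed

lemma supp_y_eq: "i \<in> {1..l} \<Longrightarrow> supp (ms i) (C i) (y t i) = ereal (supp_y t i)"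
proof (cases t)
  case 0
  assume i: "i \<in> {1..l}"
  have "supp (ms i) (C i) (y t i) = (SUP u\<in>C i. ereal 0)"
    unfolding supp_def using 0 hy0 i by (simp add: vinner_def)
  then show ?thesis using 0 C_props(1)[OF i] by (simp add: supp_y_def)
next
  case (Suc t')
  assume i: "i \<in> {1..l}"
  have "supp (ms i) (C i) (y t i) = ereal (vinner (ms i) (y t i) (proj_pt t' i))"
    unfolding Suc using proj_pt_in_C[OF i] y_Suc_max[OF i] by (rule supp_attained)
  then show ?thesis using Suc by (simp add: supp_y_def)
qed

lemma supp_y_ge: "i \<in> {1..l} \<Longrightarrow> q \<in> C i \<Longrightarrow> vinner (ms i) (y t i) q \<le> supp_y t i"
  using supp_ge[of q "C i" "ms i" "y t i"] supp_y_eq by simp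

lemma sigD_ymix: "sigD l ms C (ymix t i) = ereal (\<Sum>j=1..l. if j \<le> i then supp_y (Suc t) j else supp_y t j)"
  by (intro sigD_eq_sum) (simp add: mixb_def supp_y_eq)

lemma dfun_ymix: "dfun l ms n A vbar C (ymix t i) = ereal (d_mix t i)"
  unfolding d_mix_def by (intro dfun_eq_sum) (simp add: mixb_def supp_y_eq)

lemma dfun_y: "dfun l ms n A vbar C (y t) = ereal (d_y t)"
  unfolding d_y_def by (intro dfun_eq_sum) (simp add: supp_y_eq)

lemma ymix_0: "ymix t 0 = y t"
  unfolding mixb_def using hpad by auto

lemma ymix_l: "ymix t l = y (Suc t)"
  unfolding mixb_def using hpad by auto

lemma d_mix_0: "d_mix t 0 = d_y t"
  unfolding d_mix_def d_y_def ymix_0 by simp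

lemma d_mix_l: "d_mix t l = d_y (Suc t)"
  unfolding d_mix_def d_y_def ymix_l by simp

lemma AtY_ymix_step:
  assumes i: "i \<in> {1..l}"
  shows "AtY l ms n A (ymix t i) c
       = AtY l ms n A (ymix t (i - 1)) c + mtv (ms i) n (A i) (vsub (y (Suc t) i) (y t i)) c"
proof -
  have "AtY l ms n A (bsub (ymix t i) (ymix t (i - 1))) = mtv (ms i) n (A i) (vsub (y (Suc t) i) (y t i))"
    using i by (subst AtY_single_block[OF i]) (auto simp: bsub_def vsub_def mixb_def)
  then show ?thesis using AtY_bsub[of l ms n A "ymix t i" "ymix t (i - 1)" c] by simp
qed

lemma x_Suc_step:
  assumes x0: "x (Suc t) 0 = (\<lambda>c. vbar c - AtY l ms n A (y t) c)"
  shows "i \<le> l \<Longrightarrow> x (Suc t) i = (\<lambda>c. vbar c - AtY l ms n A (ymix t i) c)"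
proof (induction i)
  case 0
  then show ?case using x0 ymix_0 by simp
next
  case (Suc i)
  have si: "Suc i \<in> {1..l}" using Suc.prems by simp
  define g where "g = gam (Suc i)"
  define w where "w = mv (ms (Suc i)) n (A (Suc i)) (x (Suc t) i)"
  define P where "P = proj_pt t (Suc i)"
  have "vsub (y (Suc t) (Suc i)) (y t (Suc i)) = (\<lambda>k. (1 / g) * w k - (1 / g) * P k)"
    using hyi si unfolding vsub_def g_def w_def P_def proj_pt_def by auto
  then have mt: "mtv (ms (Suc i)) n (A (Suc i)) (vsub (y (Suc t) (Suc i)) (y t (Suc i))) c
      = (1 / g) * mtv (ms (Suc i)) n (A (Suc i)) w c - (1 / g) * mtv (ms (Suc i)) n (A (Suc i)) P c" for c
    by (simp only: mtv_diff mtv_scale)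
  have "x (Suc t) (Suc i) = (\<lambda>c. x (Suc t) i c - (1 / g) * mtv (ms (Suc i)) n (A (Suc i)) w c
      + (1 / g) * mtv (ms (Suc i)) n (A (Suc i)) P c)"
    using hxi si unfolding g_def w_def P_def proj_pt_def by auto
  then show ?case using Suc AtY_ymix_step[OF si, of t] unfolding mt by auto
qed

lemma x_eq_residual: "i \<le> l \<Longrightarrow> x (Suc t) i = (\<lambda>c. vbar c - AtY l ms n A (ymix t i) c)"
proof (induction t arbitrary: i)
  case 0
  have "AtY l ms n A (y 0) = (\<lambda>c. 0)" unfolding AtY_def using hy0 by (simp add: mtv_zero)
  then show ?case using x_Suc_step hxs hx0 0 by simp
next
  case (Suc t)
  have "x (Suc (Suc t)) 0 = (\<lambda>c. vbar c - AtY l ms n A (y (Suc t)) c)"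
    using hxs Suc.IH[of l] ymix_l by simp
  then show ?case using x_Suc_step Suc.prems by blast
qed

lemma gradg_ymix:
  assumes i: "i \<in> {1..l}"
  shows "gradg l ms n A vbar i (ymix t (i - 1)) = (\<lambda>k. - mv (ms i) n (A i) (x (Suc t) (i - 1)) k)"
proof -
  have "vsub (AtY l ms n A (ymix t (i - 1))) vbar = (\<lambda>c. - x (Suc t) (i - 1) c)"
    using x_eq_residual[of "i - 1" t] i unfolding vsub_def by auto
  then show ?thesis unfolding gradg_def by (simp add: mv_neg)
qed

lemma block_gap_le:
  fixes t :: nat
  assumes i: "i \<in> {1..l}"
  defines "D \<equiv> vsub (y (Suc t) i) (y t i)"
  shows "vinner (ms i) (gradg l ms n A vbar i (ymix t (i - 1))) D + supp_y (Suc t) i - supp_y t i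
      \<le> - gam i * vinner (ms i) D D"
proof -
  define G where "G = gradg l ms n A vbar i (ymix t (i - 1))"
  define P where "P = proj_pt t i"
  have GP: "(\<lambda>k. G k + P k) = (\<lambda>k. - gam i * D k)"
    unfolding G_def P_def D_def vsub_def using gradg_ymix[OF i, of t] proj_pt_eq[OF i, of t]
    by (auto simp: algebra_simps)
  have "supp_y (Suc t) i - supp_y t i \<le> vinner (ms i) (y (Suc t) i) P - vinner (ms i) (y t i) P"
    using supp_y_ge[OF i proj_pt_in_C[OF i]] unfolding supp_y_def P_def by simp
  also have "\<dots> = vinner (ms i) P D"
    unfolding D_def vsub_def by (simp add: vinner_linear vinner_commute[of "ms i" P "y (Suc t) i"] vinner_commute[of "ms i" P "y t i"])
  finally have "vinner (ms i) G D + supp_y (Suc t) i - supp_y t i \<le> vinner (ms i) (\<lambda>k. G k + P k) D"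
    by (simp add: vinner_add_left)
  also have "\<dots> = - gam i * vinner (ms i) D D" unfolding GP by (rule vinner_scale_left)
  finally show ?thesis unfolding G_def .
qed

lemma d_mix_diff:
  fixes t :: nat
  assumes i: "i \<in> {1..l}"
  defines "D \<equiv> vsub (y (Suc t) i) (y t i)"
  shows "d_mix t i - d_mix t (i - 1) = vinner (ms i) (gradg l ms n A vbar i (ymix t (i - 1))) D
     + 1/2 * vinner n (mtv (ms i) n (A i) D) (mtv (ms i) n (A i) D) + (supp_y (Suc t) i - supp_y t i)"
proof -
  have "gfun l ms n A vbar (ymix t i) = gfun l ms n A vbar (ymix t (i - 1))
     + vinner (ms i) (gradg l ms n A vbar i (ymix t (i - 1))) D
     + 1/2 * vinner n (mtv (ms i) n (A i) D) (mtv (ms i) n (A i) D)"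
  proof -
    have "ymix t i j = ymix t (i - 1) j" if "j \<noteq> i" for j using that i by (auto simp: mixb_def)
    moreover have "ymix t i i = y (Suc t) i" "ymix t (i - 1) i = y t i" using i by (auto simp: mixb_def)
    ultimately show ?thesis unfolding D_def
      using gfun_block_update[where l = l and ms = ms and n = n and A = A and v = vbar
          and Z = "ymix t i" and Y = "ymix t (i - 1)", OF i] by simp
  qed
  then show ?thesis unfolding d_mix_def using sum_mix_diff[OF i, of "supp_y (Suc t)" "supp_y t"]
    by simp
qed

lemma d_mix_step_le:
  fixes t :: nat
  assumes i: "i \<in> {1..l}"
  defines "D \<equiv> vsub (y (Suc t) i) (y t i)"
  defines "Delta \<equiv> vinner (ms i) (gradg l ms n A vbar i (ymix t (i - 1))) D + supp_y (Suc t) i - supp_y t i"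
  shows "d_mix t i - d_mix t (i - 1) \<le> 1/2 * Delta" "1/2 * Delta \<le> - (gam i / 2) * vinner (ms i) D D"
proof -
  have "vinner n (mtv (ms i) n (A i) D) (mtv (ms i) n (A i) D) \<le> gam i * vinner (ms i) D D"
    by (rule gam_bound[OF i])
  moreover have "Delta \<le> - gam i * vinner (ms i) D D"
    using block_gap_le[OF i, where t = t] unfolding Delta_def D_def .
  ultimately show "d_mix t i - d_mix t (i - 1) \<le> 1/2 * Delta" "1/2 * Delta \<le> - (gam i / 2) * vinner (ms i) D D"
    using d_mix_diff[OF i, where t = t] unfolding Delta_def D_def by argo+
qed

lemma dfun_block_step:
  assumes i: "i \<in> {1..l}"
  shows "dfun l ms n A vbar C (ymix t i) - dfun l ms n A vbar C (ymix t (i - 1))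
        \<le> ereal (1/2) *
           (ereal (vinner (ms i) (gradg l ms n A vbar i (ymix t (i - 1))) (vsub (y (Suc t) i) (y t i)))
            + sigD l ms C (ymix t i) - sigD l ms C (ymix t (i - 1)))
      \<and> ereal (1/2) *
           (ereal (vinner (ms i) (gradg l ms n A vbar i (ymix t (i - 1))) (vsub (y (Suc t) i) (y t i)))
            + sigD l ms C (ymix t i) - sigD l ms C (ymix t (i - 1)))
        \<le> ereal (- (gam i / 2) * (vnorm (ms i) (vsub (y (Suc t) i) (y t i)))\<^sup>2)"
proof -
  define S where "S i' = (\<Sum>j=1..l. if j \<le> i' then supp_y (Suc t) j else supp_y t j)" for i'
  have "S i - S (i - 1) = supp_y (Suc t) i - supp_y t i"
    unfolding S_def by (rule sum_mix_diff[OF i])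
  then show ?thesis using d_mix_step_le[OF i, where t = t]
    unfolding dfun_ymix sigD_ymix S_def[symmetric] vnorm_power2 by simp
qed

definition c_decr :: real where
  "c_decr = Min (gam ` {1..l}) / 2"

lemma c_decr_pos: "c_decr > 0"
proof -
  have "Min (gam ` {1..l}) \<in> gam ` {1..l}" using hl by (intro Min_in) auto
  then show ?thesis unfolding c_decr_def using gam_pos by auto
qed

lemma d_y_decrease:
  "d_y (Suc t) - d_y t \<le> - c_decr * binner l ms (bsub (y (Suc t)) (y t)) (bsub (y (Suc t)) (y t))"
proof -
  have "d_y (Suc t) - d_y t = (\<Sum>i=1..l. d_mix t i - d_mix t (i - 1))"
    using sum_telescope_1[of "d_mix t" l] d_mix_0 d_mix_l by simp
  also have "\<dots> \<le> (\<Sum>i=1..l. - c_decr * vinner (ms i) (bsub (y (Suc t)) (y t) i) (bsub (y (Suc t)) (y t) i))"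
  proof (rule sum_mono)
    fix i assume i: "i \<in> {1..l}"
    have "c_decr \<le> gam i / 2" unfolding c_decr_def using i by simp
    then have "c_decr * vinner (ms i) (bsub (y (Suc t)) (y t) i) (bsub (y (Suc t)) (y t) i)
        \<le> gam i / 2 * vinner (ms i) (vsub (y (Suc t) i) (y t i)) (vsub (y (Suc t) i) (y t i))"
      unfolding bsub_def by (intro mult_right_mono vinner_self_nonneg)
    then show "d_mix t i - d_mix t (i - 1)
        \<le> - c_decr * vinner (ms i) (bsub (y (Suc t)) (y t) i) (bsub (y (Suc t)) (y t) i)"
      using d_mix_step_le[OF i, where t = t] by simp
  qed
  also have "\<dots> = - c_decr * binner l ms (bsub (y (Suc t)) (y t)) (bsub (y (Suc t)) (y t))"
    unfolding binner_def by (simp add: sum_distrib_left)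
  finally show ?thesis .
qed

lemma sufficient_decrease:
  "\<exists>c>0. \<forall>t. dfun l ms n A vbar C (y (Suc t)) - dfun l ms n A vbar C (y t)
             \<le> ereal (- c * (bnorm l ms (bsub (y (Suc t)) (y t)))\<^sup>2)"
  using c_decr_pos d_y_decrease unfolding dfun_y bnorm_power2 by (intro exI[of _ c_decr]) auto

lemma d_y_bounded_below: "\<exists>K. \<forall>t. K \<le> d_y t"
proof -
  obtain z where "\<forall>i\<in>{1..l}. mv (ms i) n (A i) z \<in> C i" using hint by blast
  then have sum_le: "(\<Sum>i=1..l. vinner (ms i) (y t i) (mv (ms i) n (A i) z)) \<le> (\<Sum>i=1..l. supp_y t i)"
    for t using supp_y_ge by (intro sum_mono) auto
  have "vinner n z vbar - 1/2 * vinner n z z - 1/2 * vinner n vbar vbar \<le> d_y t" for t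
    using sum_le[of t] gfun_plus_inner_ge[of n z vbar l ms A "y t"] unfolding d_y_def by linarith
  then show ?thesis by blast
qed

lemma bnorm_y_diff_tendsto_0: "(\<lambda>t. bnorm l ms (bsub (y (Suc t)) (y t))) \<longlonglongrightarrow> 0"
proof -
  obtain K where K: "\<forall>t. K \<le> d_y t" using d_y_bounded_below by blast
  have dec: "decseq d_y"
  proof (rule decseq_SucI)
    fix t
    have "0 \<le> c_decr * binner l ms (bsub (y (Suc t)) (y t)) (bsub (y (Suc t)) (y t))"
      using c_decr_pos binner_self_nonneg by simp
    then show "d_y (Suc t) \<le> d_y t" using d_y_decrease[of t] by linarith
  qed
  obtain L where L: "d_y \<longlonglongrightarrow> L" using decseq_convergent[OF dec] K by blast
  have "(\<lambda>t. (d_y t - d_y (Suc t)) / c_decr) \<longlonglongrightarrow> (L - L) / c_decr"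
    using L LIMSEQ_Suc[OF L] by (intro tendsto_divide tendsto_diff tendsto_const) (use c_decr_pos in auto)
  then have lim: "(\<lambda>t. (d_y t - d_y (Suc t)) / c_decr) \<longlonglongrightarrow> 0" by simp
  have "(\<lambda>t. (bnorm l ms (bsub (y (Suc t)) (y t)))\<^sup>2) \<longlonglongrightarrow> 0"
  proof (rule tendsto_sandwich[OF _ _ tendsto_const lim])
    have "(bnorm l ms (bsub (y (Suc t)) (y t)))\<^sup>2 \<le> (d_y t - d_y (Suc t)) / c_decr" for t
      using d_y_decrease[of t] c_decr_pos unfolding bnorm_power2 by (simp add: field_simps)
    then show "\<forall>\<^sub>F t in sequentially. (bnorm l ms (bsub (y (Suc t)) (y t)))\<^sup>2 \<le> (d_y t - d_y (Suc t)) / c_decr"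
      by (intro always_eventually allI)
  qed simp
  from tendsto_real_sqrt[OF this] show ?thesis by (simp add: bnorm_nonneg)
qed

lemma y_coord_diff_tendsto_0: "(\<lambda>t. y (Suc t) j k - y t j k) \<longlonglongrightarrow> 0"
  by (rule tendsto_coord_diff_0[OF y_BS y_BS bnorm_y_diff_tendsto_0])

lemma subgrad_y_Suc:
  "block_subgrad l ms n A vbar (proj_pt t) (y (Suc t)) \<in> subdiff l ms (dfun l ms n A vbar C) (y (Suc t))"
  using y_BS proj_pt_in_C proj_pt_Rk y_Suc_max by (rule block_subgrad_in_subdiff)

text \<open>The subgradient equals A_i A^T (y^{t+1} - y~^{t+1}_{i-1}) - gam_i (y^{t+1}_i - y^t_i), which
  vanishes as the successive differences do.\<close>

lemma subgrad_y_Suc_tendsto_0: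
  "(\<lambda>t. block_subgrad l ms n A vbar (proj_pt t) (y (Suc t)) i k) \<longlonglongrightarrow> 0"
proof (cases "i \<in> {1..l}")
  case i: True
  have eq: "block_subgrad l ms n A vbar (proj_pt t) (y (Suc t)) i k
      = mv (ms i) n (A i) (AtY l ms n A (bsub (y (Suc t)) (ymix t (i - 1)))) k
        - gam i * (y (Suc t) i k - y t i k)" for t
  proof -
    let ?a = "vsub (AtY l ms n A (y (Suc t))) vbar"
    have "x (Suc t) (i - 1) = (\<lambda>c. vbar c - AtY l ms n A (ymix t (i - 1)) c)"
      using i by (intro x_eq_residual) auto
    then have eq: "AtY l ms n A (bsub (y (Suc t)) (ymix t (i - 1))) = (\<lambda>c. ?a c + x (Suc t) (i - 1) c)"
      by (auto simp: vsub_def AtY_bsub)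
    have sum: "mv (ms i) n (A i) ?a k + mv (ms i) n (A i) (x (Suc t) (i - 1)) k
        = mv (ms i) n (A i) (AtY l ms n A (bsub (y (Suc t)) (ymix t (i - 1)))) k"
      unfolding eq mv_add by (rule refl)
    have "block_subgrad l ms n A vbar (proj_pt t) (y (Suc t)) i k = mv (ms i) n (A i) ?a k + proj_pt t i k"
      using i unfolding block_subgrad_def gradg_def by simp
    then show ?thesis using proj_pt_eq[OF i, of t k] sum unfolding right_diff_distrib by linarith
  qed
  have "(\<lambda>t. bsub (y (Suc t)) (ymix t (i - 1)) j r) \<longlonglongrightarrow> 0" for j r
    using y_coord_diff_tendsto_0 unfolding bsub_def vsub_def mixb_def by (cases "j \<le> i - 1") simp_all
  then have "(\<lambda>t. mv (ms i) n (A i) (AtY l ms n A (bsub (y (Suc t)) (ymix t (i - 1)))) k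
        - gam i * (y (Suc t) i k - y t i k)) \<longlonglongrightarrow> mv (ms i) n (A i) (AtY l ms n A (\<lambda>_ _. 0)) k - gam i * 0"
    by (intro tendsto_diff tendsto_mult tendsto_const tendsto_mv tendsto_AtY y_coord_diff_tendsto_0)
  moreover have "AtY l ms n A (\<lambda>_ _. 0) = (\<lambda>_. 0)" unfolding AtY_def by (simp add: mtv_zero)
  ultimately show ?thesis unfolding eq by (simp add: mv_zero)
next
  case False
  then have "block_subgrad l ms n A vbar (proj_pt t) (y (Suc t)) i = (\<lambda>_. 0)" for t
    unfolding block_subgrad_def by (rule if_not_P)
  then show ?thesis by simp
qed

lemma dist_subdiff_tendsto_0:
  "(\<lambda>t. dist0 l ms (subdiff l ms (dfun l ms n A vbar C) (y t))) \<longlonglongrightarrow> 0"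
proof -
  let ?S = "\<lambda>t. block_subgrad l ms n A vbar (proj_pt t) (y (Suc t))"
  have "(\<lambda>t. bnorm l ms (?S t)) \<longlonglongrightarrow> 0" by (intro tendsto_bnorm_0 subgrad_y_Suc_tendsto_0)
  then have ub_lim: "(\<lambda>t. ereal (bnorm l ms (?S t))) \<longlonglongrightarrow> 0"
    by (simp add: zero_ereal_def tendsto_ereal)
  have "(\<lambda>t. dist0 l ms (subdiff l ms (dfun l ms n A vbar C) (y (Suc t)))) \<longlonglongrightarrow> 0"
  proof (rule tendsto_sandwich[OF _ _ tendsto_const ub_lim])
    have "0 \<le> dist0 l ms (subdiff l ms (dfun l ms n A vbar C) (y (Suc t)))" for t
      unfolding dist0_def by (rule INF_greatest) (simp add: bnorm_nonneg)
    then show "\<forall>\<^sub>F t in sequentially. 0 \<le> dist0 l ms (subdiff l ms (dfun l ms n A vbar C) (y (Suc t)))"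
      by (intro always_eventually allI)
    have "dist0 l ms (subdiff l ms (dfun l ms n A vbar C) (y (Suc t))) \<le> ereal (bnorm l ms (?S t))" for t
      unfolding dist0_def by (rule INF_lower[OF subgrad_y_Suc])
    then show "\<forall>\<^sub>F t in sequentially.
        dist0 l ms (subdiff l ms (dfun l ms n A vbar C) (y (Suc t))) \<le> ereal (bnorm l ms (?S t))"
      by (intro always_eventually allI)
  qed
  then show ?thesis by (rule LIMSEQ_imp_Suc)
qed

lemma proj_pt_subseq_tendsto:
  assumes i: "i \<in> {1..l}"
    and y_lim: "\<And>j k. (\<lambda>t. y (r t) j k) \<longlonglongrightarrow> Ys j k"
    and y_Suc_lim: "\<And>j k. (\<lambda>t. y (Suc (r t)) j k) \<longlonglongrightarrow> Ys j k"
  shows "(\<lambda>t. proj_pt (r t) i k) \<longlonglongrightarrow> mv (ms i) n (A i) (\<lambda>c. vbar c - AtY l ms n A Ys c) k"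
proof -
  have "(\<lambda>t. ymix (r t) (i - 1) j k) \<longlonglongrightarrow> Ys j k" for j k
    unfolding mixb_def by (cases "j \<le> i - 1") (simp_all add: y_lim y_Suc_lim)
  then have "(\<lambda>t. gam i * y (r t) i k
      + mv (ms i) n (A i) (\<lambda>c. vbar c - AtY l ms n A (ymix (r t) (i - 1)) c) k
      - gam i * y (Suc (r t)) i k)
    \<longlonglongrightarrow> gam i * Ys i k + mv (ms i) n (A i) (\<lambda>c. vbar c - AtY l ms n A Ys c) k - gam i * Ys i k"
    by (intro tendsto_diff tendsto_add tendsto_mult tendsto_const tendsto_mv tendsto_AtY y_lim y_Suc_lim)
  moreover have "x (Suc (r t)) (i - 1) = (\<lambda>c. vbar c - AtY l ms n A (ymix (r t) (i - 1)) c)" for t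
    using i by (intro x_eq_residual) auto
  ultimately show ?thesis using proj_pt_eq[OF i] by simp
qed

lemma limit_point_minimizer:
  assumes Ys: "Ys \<in> BS l ms" and r: "strict_mono r"
    and lim: "(\<lambda>t. bnorm l ms (bsub (y (r t)) Ys)) \<longlonglongrightarrow> 0"
    and Z: "Z \<in> BS l ms"
  shows "dfun l ms n A vbar C Ys \<le> dfun l ms n A vbar C Z"
proof -
  have y_lim: "(\<lambda>t. y (r t) j k) \<longlonglongrightarrow> Ys j k" for j k
    using tendsto_add[OF tendsto_coord_diff_0[OF y_BS Ys lim, of j k] tendsto_const[of "Ys j k"]] by simp
  have y_Suc_lim: "(\<lambda>t. y (Suc (r t)) j k) \<longlonglongrightarrow> Ys j k" for j k
    using tendsto_add[OF LIMSEQ_subseq_LIMSEQ[OF y_coord_diff_tendsto_0[of j k] r] y_lim[of j k]]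
    by (simp add: o_def)
  define P where "P i = mv (ms i) n (A i) (\<lambda>c. vbar c - AtY l ms n A Ys c)" for i
  have P_lim: "(\<lambda>t. proj_pt (r t) i k) \<longlonglongrightarrow> P i k" if i: "i \<in> {1..l}" for i k
    unfolding P_def using i y_lim y_Suc_lim by (rule proj_pt_subseq_tendsto)
  have P_C: "P i \<in> C i" if i: "i \<in> {1..l}" for i
    using C_props(3)[OF i] proj_pt_in_C[OF i] mv_Rk P_lim[OF i] unfolding P_def
    by (rule vclosedD_coordwise)
  have P_max: "vinner (ms i) (Ys i) q \<le> vinner (ms i) (Ys i) (P i)" if i: "i \<in> {1..l}" and q: "q \<in> C i"
    for i q
  proof (rule LIMSEQ_le)
    show "(\<lambda>t. vinner (ms i) (y (Suc (r t)) i) q) \<longlonglongrightarrow> vinner (ms i) (Ys i) q"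
      by (intro tendsto_vinner y_Suc_lim tendsto_const)
    show "(\<lambda>t. vinner (ms i) (y (Suc (r t)) i) (proj_pt (r t) i)) \<longlonglongrightarrow> vinner (ms i) (Ys i) (P i)"
      by (intro tendsto_vinner y_Suc_lim P_lim[OF i])
    show "\<exists>N. \<forall>t\<ge>N. vinner (ms i) (y (Suc (r t)) i) q \<le> vinner (ms i) (y (Suc (r t)) i) (proj_pt (r t) i)"
      using y_Suc_max[OF i q] by blast
  qed
  have "block_subgrad l ms n A vbar P Ys \<in> subdiff l ms (dfun l ms n A vbar C) Ys"
    using Ys P_C mv_Rk P_max unfolding P_def by (rule block_subgrad_in_subdiff)
  moreover have "block_subgrad l ms n A vbar P Ys i k = 0" for i k
    unfolding block_subgrad_def gradg_def P_def mv_add[symmetric] vsub_def by (simp add: mv_zero)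
  ultimately show ?thesis using Z by (rule zero_subgrad_imp_min)
qed

end

theorem proposition3p2:
  fixes l n :: nat
    and ms :: "nat \<Rightarrow> nat"
    and C :: "nat \<Rightarrow> (nat \<Rightarrow> real) set"
    and A :: "nat \<Rightarrow> nat \<Rightarrow> nat \<Rightarrow> real"
    and vbar :: "nat \<Rightarrow> real"
    and gam :: "nat \<Rightarrow> real"
    and x :: "nat \<Rightarrow> nat \<Rightarrow> nat \<Rightarrow> real"
    and y :: "nat \<Rightarrow> nat \<Rightarrow> nat \<Rightarrow> real"
  assumes hl: "l \<ge> 1" and hn: "n \<ge> 1"
    and hm: "\<forall>i\<in>{1..l}. ms i \<ge> 1"
    and hC: "\<forall>i\<in>{1..l}. C i \<noteq> {} \<and> C i \<subseteq> Rk (ms i) \<and> vclosed (ms i) (C i) \<and> vconvex (C i)"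
    and hA: "\<forall>i\<in>{1..l}. \<exists>r<ms i. \<exists>c<n. A i r c \<noteq> 0"
    and hv: "vbar \<in> Rk n"
    and hint: "\<exists>z\<in>Rk n. \<forall>i\<in>{1..l}. mv (ms i) n (A i) z \<in> C i"
    and hgam: "\<forall>i\<in>{1..l}. gam i = lam_max n (mtm (ms i) n (A i))"
    and hy0: "\<forall>i\<in>{1..l}. y 0 i = (\<lambda>_. 0)"
    and hpad: "\<forall>t i. i \<notin> {1..l} \<longrightarrow> y t i = (\<lambda>_. 0)"
    and hx0: "x 0 l = vbar"
    and hxs: "\<forall>t. x (Suc t) 0 = x t l"
    and hxi: "\<forall>t. \<forall>i\<in>{1..l}. x (Suc t) i =
         (\<lambda>j. x (Suc t) (i - 1) j
               - (1 / gam i) * mtv (ms i) n (A i) (mv (ms i) n (A i) (x (Suc t) (i - 1))) j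
               + (1 / gam i) * mtv (ms i) n (A i)
                   (vproj (ms i) (C i) (\<lambda>k. gam i * y t i k + mv (ms i) n (A i) (x (Suc t) (i - 1)) k)) j)"
    and hyi: "\<forall>t. \<forall>i\<in>{1..l}. y (Suc t) i =
         (\<lambda>k. y t i k + (1 / gam i) * mv (ms i) n (A i) (x (Suc t) (i - 1)) k
               - (1 / gam i) * vproj (ms i) (C i)
                   (\<lambda>k'. gam i * y t i k' + mv (ms i) n (A i) (x (Suc t) (i - 1)) k') k)"
  shows
    "(\<forall>t. \<forall>i\<in>{1..l}.
        dfun l ms n A vbar C (mixb (y (Suc t)) (y t) i)
          - dfun l ms n A vbar C (mixb (y (Suc t)) (y t) (i - 1))
        \<le> ereal (1/2) *
           (ereal (vinner (ms i) (gradg l ms n A vbar i (mixb (y (Suc t)) (y t) (i - 1)))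
                                 (vsub (y (Suc t) i) (y t i)))
            + sigD l ms C (mixb (y (Suc t)) (y t) i)
            - sigD l ms C (mixb (y (Suc t)) (y t) (i - 1)))
      \<and> ereal (1/2) *
           (ereal (vinner (ms i) (gradg l ms n A vbar i (mixb (y (Suc t)) (y t) (i - 1)))
                                 (vsub (y (Suc t) i) (y t i)))
            + sigD l ms C (mixb (y (Suc t)) (y t) i)
            - sigD l ms C (mixb (y (Suc t)) (y t) (i - 1)))
        \<le> ereal (- (gam i / 2) * (vnorm (ms i) (vsub (y (Suc t) i) (y t i)))\<^sup>2))
     \<and> (\<exists>c>0. \<forall>t. dfun l ms n A vbar C (y (Suc t)) - dfun l ms n A vbar C (y t)
                  \<le> ereal (- c * (bnorm l ms (bsub (y (Suc t)) (y t)))\<^sup>2))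
     \<and> (\<lambda>t. bnorm l ms (bsub (y (Suc t)) (y t))) \<longlonglongrightarrow> 0
     \<and> (\<lambda>t. dist0 l ms (subdiff l ms (dfun l ms n A vbar C) (y t))) \<longlonglongrightarrow> 0
     \<and> (\<forall>Ys\<in>BS l ms. (\<exists>r. strict_mono r \<and> (\<lambda>t. bnorm l ms (bsub (y (r t)) Ys)) \<longlonglongrightarrow> 0)
          \<longrightarrow> (\<forall>Z\<in>BS l ms. dfun l ms n A vbar C Ys \<le> dfun l ms n A vbar C Z))"
proof -
  interpret dual_block_iteration l n ms C A vbar gam x y
    by unfold_locales (fact hl hC hA hint hgam hy0 hpad hx0 hxs hxi hyi)+
  show ?thesis
    using dfun_block_step sufficient_decrease bnorm_y_diff_tendsto_0 dist_subdiff_tendsto_0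
      limit_point_minimizer
    by blast
qed

end
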